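(* Fix a $2\times 2$ unitary matrix $C_0=\begin{bmatrix} a & b\\ c & d\end{bmatrix}$ with $abcd\neq 0$. For an integer $M\ge 1$ and a frequency $\xi\in\mathbb{R}$, consider the quantum walk on $\mathbb{Z}$ with inflow described in the context, with stationary comfortability distribution $\mu_M$ on $\{0,1,\dots,M-1\}$, and let $X_M$ be a random variable with law $\mu_M$. Put $\omega=\arg(\det C_0)/2+\xi$ (the frequency $\xi$, hence $\omega$, may depend on $M$). Then, as $M\to\infty$, $X_M/M$ converges in distribution to the probability law on $\mathbb{R}$ with density $\rho^{(\omega)}(x)=\mathbf{1}_{[0,1]}(x)\,g(x)$, where: (i) if $\omega\in B_{out}$, then $g(x)=\delta(x)$, i.e. the limit law is the point mass at $0$; (ii) if $\omega\in\partial B$, or if $\omega\in B_{in}$ and $M\theta\to 0$, then $g(x)=3(1-x)^2$; (iii) if $\omega\in B_{in}$ and $M\theta\to\theta_*$ with $0<\theta_*<\infty$, then $g(x)=c(\theta_* )\sin^2[(1-x)\theta_*]$ with $c(\theta_* )=2\left(1-\frac{\sin 2\theta_*}{2\theta_*}\right)^{-1}$; (iv) if $\omega\in B_{in}$ and $M\theta\to\infty$, then $g(x)=1$ (uniform law on $[0,1]$).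
   Context: Notation: $|L\rangle=[1,0]^\top$, $|R\rangle=[0,1]^\top$. For $j\in\mathbb{Z}$ set $C(j)=C_0$ if $j\in\{0,\dots,M-1\}$ and $C(j)=I$ (identity) otherwise, and $P(j)=|L\rangle\langle L|C(j)$, $Q(j)=|R\rangle\langle R|C(j)$. The operator $U_M$ acts on uniformly bounded functions $\psi:\mathbb{Z}\to\mathbb{C}^2$ by $(U_M\psi)(j)=P(j+1)\psi(j+1)+Q(j-1)\psi(j-1)$. The initial state is $\psi_0(j)=e^{i\xi j}|R\rangle$ for $j\le 0$ and $\psi_0(j)=0$ for $j>0$, and $\psi_t=U_M^t\psi_0$. The state $e^{i\xi t}\psi_t$ converges pointwise to a stationary state as $t\to\infty$, and the distribution of the comfortability is $\mu_M(j)=\lim_{t\to\infty}\frac{\|\psi_t(j)\|^2}{\sum_{k=0}^{M-1}\|\psi_t(k)\|^2}$ for $j\in\{0,\dots,M-1\}$. The parameter regions are $B_{out}=\{\omega: |\cos\omega|>|a|\}$, $\partial B=\{\omega:|\cos\omega|=|a|\}$, $B_{in}=\{\omega:|\cos\omega|<|a|\}$. For $\omega\in B_{in}$, $\theta=\arccos\frac{\cos\omega}{|a|}$ if $\frac{\cos\omega}{|a|}>0$ and $\theta=\pi-\arccos\frac{\cos\omega}{|a|}$ otherwise (so $\theta>0$); in cases (ii)–(iv) with $\omega\in B_{in}$, $\omega$ and $\theta$ depend on $M$. In cases (i) and (ii) with $\omega\in\partial B$, $\omega$ is fixed. *)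

theory Defs
  imports "HOL-Probability.Probability"
begin

text \<open>States are functions int => complex x complex; the pair (x, y) stands for
  x |L> + y |R>. The coin is C0 = [[a, b], [c, d]].\<close>

definition unitary2 :: "complex \<Rightarrow> complex \<Rightarrow> complex \<Rightarrow> complex \<Rightarrow> bool" where
  "unitary2 a b c d \<longleftrightarrow>
     a * cnj a + b * cnj b = 1 \<and> c * cnj c + d * cnj d = 1 \<and> a * cnj c + b * cnj d = 0"

definition coin_apply ::
  "complex \<Rightarrow> complex \<Rightarrow> complex \<Rightarrow> complex \<Rightarrow> nat \<Rightarrow> int \<Rightarrow> complex \<times> complex \<Rightarrow> complex \<times> complex" where
  "coin_apply a b c d M j v =
     (if 0 \<le> j \<and> j < int M then (a * fst v + b * snd v, c * fst v + d * snd v) else v)"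

text \<open>(U_M psi)(j) = P(j+1) psi(j+1) + Q(j-1) psi(j-1), with P(j) = |L><L|C(j), Q(j) = |R><R|C(j).\<close>
definition walk_step ::
  "complex \<Rightarrow> complex \<Rightarrow> complex \<Rightarrow> complex \<Rightarrow> nat \<Rightarrow> (int \<Rightarrow> complex \<times> complex) \<Rightarrow> (int \<Rightarrow> complex \<times> complex)" where
  "walk_step a b c d M \<psi> j =
     (fst (coin_apply a b c d M (j + 1) (\<psi> (j + 1))), snd (coin_apply a b c d M (j - 1) (\<psi> (j - 1))))"

definition psi_init :: "real \<Rightarrow> int \<Rightarrow> complex \<times> complex" where
  "psi_init \<xi> j = (if j \<le> 0 then (0, exp (\<i> * complex_of_real (\<xi> * real_of_int j))) else (0, 0))"

definition psi :: "complex \<Rightarrow> complex \<Rightarrow> complex \<Rightarrow> complex \<Rightarrow> nat \<Rightarrow> real \<Rightarrow> nat \<Rightarrow> int \<Rightarrow> complex \<times> complex" where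
  "psi a b c d M \<xi> t = (walk_step a b c d M ^^ t) (psi_init \<xi>)"

definition normsq :: "complex \<times> complex \<Rightarrow> real" where
  "normsq v = (cmod (fst v))\<^sup>2 + (cmod (snd v))\<^sup>2"

definition comfort :: "complex \<Rightarrow> complex \<Rightarrow> complex \<Rightarrow> complex \<Rightarrow> nat \<Rightarrow> real \<Rightarrow> nat \<Rightarrow> real" where
  "comfort a b c d M \<xi> j =
     (if j < M then
        lim (\<lambda>t. normsq (psi a b c d M \<xi> t (int j)) /
                  (\<Sum>k<M. normsq (psi a b c d M \<xi> t (int k))))
      else 0)"

definition scaled_law :: "complex \<Rightarrow> complex \<Rightarrow> complex \<Rightarrow> complex \<Rightarrow> nat \<Rightarrow> real \<Rightarrow> real measure" where
  "scaled_law a b c d M \<xi> =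
     distr (density (count_space UNIV) (\<lambda>j. ennreal (comfort a b c d M \<xi> j))) borel
           (\<lambda>j. real j / real M)"

definition omega_of :: "complex \<Rightarrow> complex \<Rightarrow> complex \<Rightarrow> complex \<Rightarrow> real \<Rightarrow> real" where
  "omega_of a b c d \<xi> = Arg (a * d - b * c) / 2 + \<xi>"

definition theta_of :: "complex \<Rightarrow> real \<Rightarrow> real" where
  "theta_of a \<omega> = (if cos \<omega> / cmod a > 0 then arccos (cos \<omega> / cmod a)
                    else pi - arccos (cos \<omega> / cmod a))"

definition law_with_density :: "(real \<Rightarrow> real) \<Rightarrow> real measure" where
  "law_with_density g = density lborel (\<lambda>x. ennreal (indicator {0..1} x * g x))"

end

(*
  Inside the strip {0..M-1} the state splits as psi_t = e^(-i xi t) Phi + E^t (psi_0 - Phi), where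
  Phi is a stationary state and E is the walk without inflow that discards the amplitude leaving
  the strip. As a is nonzero, amplitude that stays in the strip for 2M steps forces leakage at
  site 0 along a light cone, so E^(2M) is a strict contraction, E^t -> 0, and mu_M(j) is
  proportional to |Phi(j)|^2.

  Solving the eigenvalue equations from the right end of the strip gives Phi in terms of the
  Chebyshev numbers U_(k-1)(kappa), kappa = cos omega / |a|; |Phi(M-k)|^2 is proportional to
  g(k) = U_(k-1)^2 + U_(k-2)^2 - 2 |a|^2 kappa U_(k-1) U_(k-2). Hence P(X_M / M > x) = G(K) / G(M)
  with G(K) = g(1) + ... + g(K) and K ~ (1 - x) M. For |kappa| > 1 the U_k grow geometrically and
  the ratio tends to 0. For |kappa| = 1, U_(k-1) = k and G is a cubic, giving (1 - x)^3. For
  |kappa| = cos theta < 1, U_(k-1) = sin (k theta) / sin theta and G(K) sin^2 theta has the closed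
  form K (1 - |a|^2 cos^2 theta) - (1 - |a|^2) cos theta sin (2 K theta) / (2 sin theta), whose
  ratio tends to (1 - x)^3, to the sine law or to 1 - x according as M theta tends to 0, to
  theta_* or to infinity.
*)

theory Submission
  imports Defs "HOL-Real_Asymp.Real_Asymp"
begin

section \<open>Unitary coins and the walk killed outside the strip\<close>

lemma power2_norm_prod: "(norm v)\<^sup>2 = (norm (fst v))\<^sup>2 + (norm (snd v))\<^sup>2"
  by (cases v) (simp add: norm_Pair)

locale unitary_coin =
  fixes a b c d :: complex
  assumes unitary: "unitary2 a b c d" and entries_nonzero: "a * b * c * d \<noteq> 0"
begin

lemma a_nonzero: "a \<noteq> 0" and b_nonzero: "b \<noteq> 0"
  using entries_nonzero by auto

lemma row_norms: "a * cnj a + b * cnj b = 1" "c * cnj c + d * cnj d = 1"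
  and rows_orthogonal: "cnj a * c + cnj b * d = 0"
proof -
  show "a * cnj a + b * cnj b = 1" "c * cnj c + d * cnj d = 1"
    using unitary unfolding unitary2_def by auto
  have "cnj (a * cnj c + b * cnj d) = 0" using unitary unfolding unitary2_def by simp
  then show "cnj a * c + cnj b * d = 0" by (simp add: mult.commute)
qed

lemma row_norms_real: "(cmod a)\<^sup>2 + (cmod b)\<^sup>2 = 1" "(cmod c)\<^sup>2 + (cmod d)\<^sup>2 = 1"
proof -
  have "complex_of_real ((cmod a)\<^sup>2 + (cmod b)\<^sup>2) = 1" "complex_of_real ((cmod c)\<^sup>2 + (cmod d)\<^sup>2) = 1"
    by (simp_all only: of_real_add complex_norm_square row_norms)
  then show "(cmod a)\<^sup>2 + (cmod b)\<^sup>2 = 1" "(cmod c)\<^sup>2 + (cmod d)\<^sup>2 = 1"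
    using of_real_eq_1_iff by blast+
qed

lemma norm_entries_le_1: "cmod a \<le> 1" "cmod b \<le> 1" "cmod c \<le> 1" "cmod d \<le> 1"
proof -
  have le: "x \<le> 1" if "x\<^sup>2 + y\<^sup>2 = 1" "0 \<le> x" for x y :: real
    using that abs_square_le_1[of x] zero_le_power2[of y] by auto
  show "cmod a \<le> 1" "cmod b \<le> 1" "cmod c \<le> 1" "cmod d \<le> 1"
    using le[OF row_norms_real(1)] le[of "cmod b" "cmod a"] le[OF row_norms_real(2)] le[of "cmod d" "cmod c"]
      row_norms_real by (simp_all add: add.commute)
qed

lemma norm_a_less_1: "cmod a < 1"
proof -
  have "0 < (cmod b)\<^sup>2" using b_nonzero by simp
  then have "(cmod a)\<^sup>2 < 1" using row_norms_real(1) by linarith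
  then show ?thesis using abs_square_less_1[of "cmod a"] by simp
qed

definition coin_det :: complex where
  "coin_det = a * d - b * c"

lemma lower_row_eq: "c = - coin_det * cnj b" "d = coin_det * cnj a"
proof -
  have "- coin_det * cnj b - c = c * (a * cnj a + b * cnj b - 1) - a * (cnj a * c + cnj b * d)"
    unfolding coin_det_def by (simp add: algebra_simps)
  then show "c = - coin_det * cnj b" using row_norms rows_orthogonal by simp
  have "coin_det * cnj a - d = d * (a * cnj a + b * cnj b - 1) - b * (cnj a * c + cnj b * d)"
    unfolding coin_det_def by (simp add: algebra_simps)
  then show "d = coin_det * cnj a" using row_norms rows_orthogonal by simp
qed

lemma coin_det_mult_cnj: "coin_det * cnj coin_det = 1"
  and column_relations: "a * cnj a + c * cnj c = 1" "b * cnj b + d * cnj d = 1"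
    "a * cnj b + c * cnj d = 0"
proof -
  \<comment> \<open>\<open>coin_det\<close> depends on \<open>c\<close> and \<open>d\<close>: it is frozen as \<open>D\<close> before they are rewritten.\<close>
  obtain D where D: "D = coin_det" by blast
  have c: "c = - D * cnj b" and d: "d = D * cnj a" using lower_row_eq D by simp_all
  have "c * cnj c + d * cnj d = D * cnj D * (a * cnj a + b * cnj b)"
    unfolding c d by (simp add: algebra_simps)
  then show u: "coin_det * cnj coin_det = 1" using row_norms D by simp
  have "a * cnj a + c * cnj c = a * cnj a + D * cnj D * (b * cnj b)"
    unfolding c by (simp add: algebra_simps)
  then show "a * cnj a + c * cnj c = 1" using u row_norms D by simp
  have "b * cnj b + d * cnj d = b * cnj b + D * cnj D * (a * cnj a)"
    unfolding d by (simp add: algebra_simps)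
  then show "b * cnj b + d * cnj d = 1" using u row_norms D by (simp add: algebra_simps)
  have "a * cnj b + c * cnj d = a * cnj b * (1 - D * cnj D)"
    unfolding c d by (simp add: algebra_simps)
  then show "a * cnj b + c * cnj d = 0" using u D by simp
qed

lemma norm_coin_det: "cmod coin_det = 1"
proof -
  have "complex_of_real ((cmod coin_det)\<^sup>2) = 1"
    by (simp only: complex_norm_square coin_det_mult_cnj)
  then have "(cmod coin_det)\<^sup>2 = 1" using of_real_eq_1_iff by blast
  then show ?thesis using norm_ge_zero[of coin_det] by (auto simp: power2_eq_1_iff)
qed

definition coin_L :: "complex \<times> complex \<Rightarrow> complex" where
  "coin_L v = a * fst v + b * snd v"

definition coin_R :: "complex \<times> complex \<Rightarrow> complex" where
  "coin_R v = c * fst v + d * snd v"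

lemma coin_preserves_norm: "(cmod (coin_L v))\<^sup>2 + (cmod (coin_R v))\<^sup>2 = (norm v)\<^sup>2"
proof -
  obtain x y where v: "v = (x, y)" by (cases v)
  have expand: "\<And>a b c d x y A B C D X Y :: complex.
     (a*x+b*y)*(A*X+B*Y) + (c*x+d*y)*(C*X+D*Y) = x*X*(a*A+c*C) + y*Y*(b*B+d*D) + x*Y*(a*B+c*D) + X*y*(A*b+C*d)"
    by (simp add: algebra_simps)
  have "complex_of_real ((cmod (coin_L v))\<^sup>2 + (cmod (coin_R v))\<^sup>2)
      = (a * x + b * y) * (cnj a * cnj x + cnj b * cnj y) + (c * x + d * y) * (cnj c * cnj x + cnj d * cnj y)"
    unfolding coin_L_def coin_R_def v
    by (simp only: fst_conv snd_conv complex_norm_square of_real_add complex_cnj_add complex_cnj_mult)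
  also have "\<dots> = x * cnj x * (a * cnj a + c * cnj c) + y * cnj y * (b * cnj b + d * cnj d)
       + x * cnj y * (a * cnj b + c * cnj d) + cnj x * y * cnj (a * cnj b + c * cnj d)"
    unfolding expand by (simp add: mult.commute)
  also have "\<dots> = complex_of_real ((norm v)\<^sup>2)"
    unfolding column_relations power2_norm_prod v fst_conv snd_conv of_real_add complex_norm_square
    by simp
  finally show ?thesis using of_real_eq_iff by blast
qed

text \<open>The walk \<open>U\<^sub>M\<close> read on the strip \<open>{0..M-1}\<close> without inflow: amplitude leaving the strip
  is discarded.\<close>
definition killed_step :: "nat \<Rightarrow> (nat \<Rightarrow> complex \<times> complex) \<Rightarrow> nat \<Rightarrow> complex \<times> complex" where
  "killed_step M v j =
     (if Suc j < M then coin_L (v (Suc j)) else 0, if 0 < j then coin_R (v (j - 1)) else 0)"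

definition strip_energy :: "nat \<Rightarrow> (nat \<Rightarrow> complex \<times> complex) \<Rightarrow> real" where
  "strip_energy M v = (\<Sum>j<M. (norm (v j))\<^sup>2)"

definition boundary_loss :: "nat \<Rightarrow> (nat \<Rightarrow> complex \<times> complex) \<Rightarrow> real" where
  "boundary_loss M v = (cmod (coin_L (v 0)))\<^sup>2 + (cmod (coin_R (v (M - 1))))\<^sup>2"

lemma strip_energy_nonneg: "0 \<le> strip_energy M v"
  unfolding strip_energy_def by (auto intro: sum_nonneg)

lemma boundary_loss_nonneg: "0 \<le> boundary_loss M v"
  unfolding boundary_loss_def by simp

lemma strip_energy_killed_step:
  assumes "0 < M"
  shows "strip_energy M (killed_step M v) + boundary_loss M v = strip_energy M v"
proof -
  obtain m where m: "M = Suc m" using assms by (cases M) auto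
  define p where "p j = (cmod (coin_L (v j)))\<^sup>2" for j
  define q where "q j = (cmod (coin_R (v j)))\<^sup>2" for j
  have step: "(norm (killed_step M v j))\<^sup>2 =
      (if Suc j < M then p (Suc j) else 0) + (if 0 < j then q (j - 1) else 0)" for j
    unfolding killed_step_def power2_norm_prod p_def q_def by simp
  have "(\<Sum>j<M. if Suc j < M then p (Suc j) else 0) = (\<Sum>j<m. p (Suc j))"
    unfolding m by simp
  also have "\<dots> = (\<Sum>j<M. p j) - p 0"
    unfolding m sum.lessThan_Suc_shift by simp
  finally have left: "(\<Sum>j<M. if Suc j < M then p (Suc j) else 0) = (\<Sum>j<M. p j) - p 0" .
  have "(\<Sum>j<Suc m. if 0 < j then q (j - 1) else 0) = (\<Sum>j<m. q j)"
    by (simp only: sum.lessThan_Suc_shift) simp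
  then have right: "(\<Sum>j<M. if 0 < j then q (j - 1) else 0) = (\<Sum>j<M. q j) - q m"
    unfolding m by simp
  have "strip_energy M (killed_step M v) = (\<Sum>j<M. p j) - p 0 + ((\<Sum>j<M. q j) - q m)"
    unfolding strip_energy_def step sum.distrib left right ..
  moreover have "strip_energy M v = (\<Sum>j<M. p j) + (\<Sum>j<M. q j)"
    unfolding strip_energy_def sum.distrib[symmetric] p_def q_def coin_preserves_norm ..
  ultimately show ?thesis unfolding boundary_loss_def p_def q_def m by simp
qed

lemma strip_energy_killed_iter:
  assumes "0 < M"
  shows "strip_energy M ((killed_step M ^^ n) v) + (\<Sum>t<n. boundary_loss M ((killed_step M ^^ t) v))
    = strip_energy M v"
proof (induction n)
  case (Suc n)
  then show ?case
    using strip_energy_killed_step[OF assms, of "(killed_step M ^^ n) v"] by simp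
qed simp

lemma strip_energy_killed_antimono:
  assumes "0 < M" "m \<le> n"
  shows "strip_energy M ((killed_step M ^^ n) v) \<le> strip_energy M ((killed_step M ^^ m) v)"
proof -
  have "(killed_step M ^^ n) v = (killed_step M ^^ (n - m)) ((killed_step M ^^ m) v)"
    using assms(2) by (metis funpow_add le_add_diff_inverse2 o_apply)
  moreover have "strip_energy M ((killed_step M ^^ k) w) \<le> strip_energy M w" for k w
    using strip_energy_killed_iter[OF assms(1), of k w]
      sum_nonneg[of "{..<k}" "\<lambda>t. boundary_loss M ((killed_step M ^^ t) w)"] boundary_loss_nonneg
    by simp
  ultimately show ?thesis by simp
qed

text \<open>Since \<open>a \<noteq> 0\<close>, the recurrence \<open>coin_L (v\<^sub>t\<^sub>+\<^sub>1 j) = a coin_L (v\<^sub>t (j+1)) + b coin_R (v\<^sub>t (j-1))\<close>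
  can be solved for the amplitude at site \<open>j + 1\<close>: a bound on what leaks out at site 0 during
  \<open>2M\<close> steps propagates to every site of the strip along a light cone.\<close>
lemma light_cone_bound:
  assumes \<sigma>: "0 \<le> \<sigma>"
    and leak: "\<And>t. t < 2 * M \<Longrightarrow> cmod (coin_L ((killed_step M ^^ t) v 0)) \<le> \<sigma>"
  shows "j < M \<Longrightarrow> j \<le> t \<Longrightarrow> t + j < 2 * M \<Longrightarrow>
    cmod (coin_L ((killed_step M ^^ t) v j)) \<le> (3 / cmod a) ^ j * \<sigma> \<and>
    (0 < j \<longrightarrow> cmod (coin_R ((killed_step M ^^ t) v (j - 1))) \<le> (3 / cmod a) ^ j * \<sigma>)"
proof (induction j arbitrary: t)
  case 0
  then show ?case using leak by simp
next
  case (Suc j)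
  let ?L = "\<lambda>t j. coin_L ((killed_step M ^^ t) v j)"
  let ?R = "\<lambda>t j. coin_R ((killed_step M ^^ t) v j)"
  define K where "K = 3 / cmod a"
  define B where "B = K ^ j * \<sigma>"
  have a: "0 < cmod a" "cmod a \<le> 1" using a_nonzero norm_entries_le_1 by auto
  then have "1 \<le> K" unfolding K_def by simp
  then have B: "0 \<le> B" unfolding B_def using \<sigma> by simp
  define R' where "R' t = (if 0 < j then ?R t (j - 1) else 0)" for t
  have IH: "cmod (?L t j) \<le> B" "cmod (R' t) \<le> B" if "j \<le> t" "t + j < 2 * M" for t
    using Suc.IH[OF _ that] Suc.prems B unfolding B_def K_def R'_def by auto
  have L_next: "cmod (?L t (Suc j)) \<le> 2 * B / cmod a" if "j \<le> t" "t + Suc j < 2 * M" for t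
  proof -
    have "a * ?L t (Suc j) = ?L (Suc t) j - b * R' t"
      using Suc.prems unfolding R'_def by (simp add: killed_step_def coin_L_def)
    then have "cmod a * cmod (?L t (Suc j)) \<le> cmod (?L (Suc t) j) + cmod b * cmod (R' t)"
      by (metis norm_mult norm_triangle_ineq4)
    also have "\<dots> \<le> B + 1 * B"
      using IH[of "Suc t"] IH(2)[of t] that norm_entries_le_1(2) B by (intro add_mono mult_mono) auto
    finally show ?thesis using a by (simp add: field_simps)
  qed
  have KB: "K ^ Suc j * \<sigma> = K * B" unfolding B_def by simp
  show ?case
  proof (intro conjI impI)
    have "cmod (?L t (Suc j)) \<le> 2 * B / cmod a" using L_next Suc.prems by auto
    also have "\<dots> \<le> K * B" unfolding K_def using B a by (simp add: divide_right_mono)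
    finally show "cmod (?L t (Suc j)) \<le> (3 / cmod a) ^ Suc j * \<sigma>"
      unfolding K_def[symmetric] KB .
    obtain s where s: "t = Suc s" using Suc.prems by (cases t) auto
    have "?R t j = c * ?L s (Suc j) + d * R' s"
      using Suc.prems unfolding R'_def s by (simp add: killed_step_def coin_R_def coin_L_def)
    then have "cmod (?R t j) \<le> cmod c * cmod (?L s (Suc j)) + cmod d * cmod (R' s)"
      by (metis norm_mult norm_triangle_ineq)
    also have "\<dots> \<le> 1 * (2 * B / cmod a) + 1 * (B / cmod a)"
    proof (intro add_mono mult_mono)
      show "cmod (?L s (Suc j)) \<le> 2 * B / cmod a" using L_next[of s] Suc.prems s by auto
      have "cmod (R' s) \<le> B" using IH(2)[of s] Suc.prems s by auto
      also have "B \<le> B / cmod a" using B a by (simp add: field_simps mult_left_le)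
      finally show "cmod (R' s) \<le> B / cmod a" .
    qed (use norm_entries_le_1 B a in auto)
    also have "\<dots> = K * B" unfolding K_def by (simp add: field_simps)
    finally show "cmod (?R t (Suc j - 1)) \<le> (3 / cmod a) ^ Suc j * \<sigma>"
      unfolding K_def[symmetric] KB by simp
  qed
qed


lemma strip_energy_le_boundary_loss:
  assumes M: "0 < M"
  shows "strip_energy M ((killed_step M ^^ M) v)
    \<le> 2 * real M * ((3 / cmod a) ^ M)\<^sup>2 * (\<Sum>t<2 * M. boundary_loss M ((killed_step M ^^ t) v))"
proof -
  let ?v = "\<lambda>t. (killed_step M ^^ t) v"
  define K where "K = 3 / cmod a"
  define S where "S = (\<Sum>t<2 * M. boundary_loss M (?v t))"
  have "1 \<le> K" unfolding K_def using a_nonzero norm_entries_le_1 by simp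
  have S: "0 \<le> S" unfolding S_def by (auto intro: sum_nonneg boundary_loss_nonneg)
  obtain m where m: "M = Suc m" using M by (cases M) auto
  have leak: "cmod (coin_L (?v t 0)) \<le> sqrt S" if "t < 2 * M" for t
  proof -
    have "(cmod (coin_L (?v t 0)))\<^sup>2 \<le> boundary_loss M (?v t)" unfolding boundary_loss_def by simp
    also have "\<dots> \<le> S" unfolding S_def using that
      by (intro member_le_sum) (auto intro: boundary_loss_nonneg)
    finally show ?thesis by (simp add: real_le_rsqrt)
  qed
  note cone = light_cone_bound[OF real_sqrt_ge_zero[OF S] leak, folded K_def]
  have K_pow: "K ^ i * sqrt S \<le> K ^ M * sqrt S" if "i \<le> M" for i
    using that \<open>1 \<le> K\<close> S by (intro mult_right_mono power_increasing) auto
  have bound0: "0 \<le> K ^ M * sqrt S" using \<open>1 \<le> K\<close> S by simp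
  have site: "(norm (?v M j))\<^sup>2 \<le> 2 * (K ^ M * sqrt S)\<^sup>2" if j: "j < M" for j
  proof -
    have vM: "?v M j = killed_step M (?v m) j" unfolding m by simp
    have "cmod (fst (?v M j)) \<le> K ^ M * sqrt S"
    proof (cases "Suc j < M")
      case True
      then have "cmod (coin_L (?v m (Suc j))) \<le> K ^ Suc j * sqrt S" using cone[of "Suc j" m] m by simp
      then show ?thesis using vM True K_pow[of "Suc j"] by (simp add: killed_step_def)
    qed (use vM bound0 in \<open>simp add: killed_step_def\<close>)
    moreover have "cmod (snd (?v M j)) \<le> K ^ M * sqrt S"
    proof (cases "0 < j")
      case True
      then have "cmod (coin_R (?v m (j - 1))) \<le> K ^ j * sqrt S" using cone[of j m] j m by simp
      then show ?thesis using vM True K_pow[of j] j by (simp add: killed_step_def)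
    qed (use vM bound0 in \<open>simp add: killed_step_def\<close>)
    ultimately have "(cmod (fst (?v M j)))\<^sup>2 \<le> (K ^ M * sqrt S)\<^sup>2"
      "(cmod (snd (?v M j)))\<^sup>2 \<le> (K ^ M * sqrt S)\<^sup>2"
      by (simp_all add: power_mono)
    then show ?thesis unfolding power2_norm_prod by simp
  qed
  have "strip_energy M (?v M) \<le> (\<Sum>j<M. 2 * (K ^ M * sqrt S)\<^sup>2)"
    unfolding strip_energy_def using site by (intro sum_mono) auto
  also have "\<dots> = 2 * real M * (K ^ M)\<^sup>2 * S"
    using S by (simp add: power_mult_distrib)
  finally show ?thesis unfolding K_def S_def .
qed

lemma killed_step_contraction:
  assumes M: "0 < M"
  obtains q where "0 \<le> q" "q < 1"
    "\<And>v. strip_energy M ((killed_step M ^^ (2 * M)) v) \<le> q * strip_energy M v"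
proof
  define C where "C = 2 * real M * ((3 / cmod a) ^ M)\<^sup>2"
  have C: "0 \<le> C" unfolding C_def by simp
  show "0 \<le> C / (1 + C)" "C / (1 + C) < 1" using C by auto
  fix v
  let ?v = "\<lambda>t. (killed_step M ^^ t) v"
  have "strip_energy M (?v (2 * M)) \<le> strip_energy M (?v M)"
    using strip_energy_killed_antimono[OF M] by simp
  also have "\<dots> \<le> C * (\<Sum>t<2 * M. boundary_loss M (?v t))"
    using strip_energy_le_boundary_loss[OF M, of v] unfolding C_def .
  also have "(\<Sum>t<2 * M. boundary_loss M (?v t)) = strip_energy M v - strip_energy M (?v (2 * M))"
    using strip_energy_killed_iter[OF M, of "2 * M" v] by linarith
  finally have "strip_energy M (?v (2 * M)) * (1 + C) \<le> C * strip_energy M v"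
    by (simp add: algebra_simps)
  then show "strip_energy M (?v (2 * M)) \<le> C / (1 + C) * strip_energy M v"
    using C by (simp add: field_simps)
qed

lemma strip_energy_killed_tendsto_0:
  assumes M: "0 < M"
  shows "(\<lambda>t. strip_energy M ((killed_step M ^^ t) v)) \<longlonglongrightarrow> 0"
proof -
  obtain q where q: "0 \<le> q" "q < 1"
    "\<And>v. strip_energy M ((killed_step M ^^ (2 * M)) v) \<le> q * strip_energy M v"
    using killed_step_contraction[OF M] by blast
  define T where "T = 2 * M"
  have periods: "strip_energy M ((killed_step M ^^ (n * T)) v) \<le> q ^ n * strip_energy M v" for n
  proof (induction n)
    case (Suc n)
    have "(killed_step M ^^ (Suc n * T)) v = (killed_step M ^^ (2 * M)) ((killed_step M ^^ (n * T)) v)"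
      unfolding T_def by (simp add: funpow_add)
    then have "strip_energy M ((killed_step M ^^ (Suc n * T)) v)
        \<le> q * strip_energy M ((killed_step M ^^ (n * T)) v)"
      using q(3) by simp
    also have "\<dots> \<le> q * (q ^ n * strip_energy M v)" using Suc q(1) by (rule mult_left_mono)
    finally show ?case by simp
  qed simp
  have bound: "strip_energy M ((killed_step M ^^ t) v) \<le> q ^ (t div T) * strip_energy M v" for t
  proof -
    have "strip_energy M ((killed_step M ^^ t) v) \<le> strip_energy M ((killed_step M ^^ (t div T * T)) v)"
      using M by (intro strip_energy_killed_antimono) simp_all
    also have "\<dots> \<le> q ^ (t div T) * strip_energy M v" by (rule periods)
    finally show ?thesis .
  qed
  have "filterlim (\<lambda>t. t div T) at_top sequentially"
    using M unfolding T_def by (intro filterlim_at_top_div_const_nat) simp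
  then have "(\<lambda>t. q ^ (t div T)) \<longlonglongrightarrow> 0"
    using filterlim_compose[OF LIMSEQ_power_zero[of q]] q by simp
  then have lim: "(\<lambda>t. q ^ (t div T) * strip_energy M v) \<longlonglongrightarrow> 0"
    by (rule tendsto_mult_left_zero)
  show ?thesis
    by (rule tendsto_sandwich[OF _ _ tendsto_const lim])
       (auto intro!: always_eventually strip_energy_nonneg bound)
qed

lemma killed_iter_tendsto_0:
  assumes "j < M"
  shows "(\<lambda>t. (killed_step M ^^ t) v j) \<longlonglongrightarrow> 0"
proof -
  have site: "norm ((killed_step M ^^ t) v j) \<le> sqrt (strip_energy M ((killed_step M ^^ t) v))" for t
    unfolding strip_energy_def using assms
    by (intro real_le_rsqrt member_le_sum) auto
  have "(\<lambda>t. sqrt (strip_energy M ((killed_step M ^^ t) v))) \<longlonglongrightarrow> sqrt 0"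
    using assms by (intro tendsto_real_sqrt strip_energy_killed_tendsto_0) simp
  then have lim: "(\<lambda>t. sqrt (strip_energy M ((killed_step M ^^ t) v))) \<longlonglongrightarrow> 0"
    by simp
  have "(\<lambda>t. norm ((killed_step M ^^ t) v j)) \<longlonglongrightarrow> 0"
    by (rule tendsto_sandwich[OF _ _ tendsto_const lim]) (auto intro!: always_eventually site)
  then show ?thesis by (simp add: tendsto_norm_zero_iff)
qed

end

section \<open>Stationary states\<close>

lemma psi_Suc: "psi a b c d M \<xi> (Suc t) = walk_step a b c d M (psi a b c d M \<xi> t)"
  by (simp add: psi_def)

lemma psi_fst_right_of_strip: "int M \<le> j \<Longrightarrow> fst (psi a b c d M \<xi> t j) = 0"
  by (induction t arbitrary: j) (simp_all add: psi_def psi_init_def psi_Suc walk_step_def coin_apply_def)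

lemma psi_snd_left_of_strip:
  "j \<le> 0 \<Longrightarrow> snd (psi a b c d M \<xi> t j) = exp (\<i> * of_real (\<xi> * (of_int j - of_nat t)))"
proof (induction t arbitrary: j)
  case 0
  then show ?case by (simp add: psi_def psi_init_def)
next
  case (Suc t)
  have "snd (psi a b c d M \<xi> (Suc t) j) = snd (psi a b c d M \<xi> t (j - 1))"
    using Suc.prems by (simp add: psi_Suc walk_step_def coin_apply_def)
  also have "\<dots> = exp (\<i> * of_real (\<xi> * (of_int j - of_nat (Suc t))))"
    using Suc by (simp add: algebra_simps)
  finally show ?case .
qed

lemma psi_inflow: "snd (psi a b c d M \<xi> t (-1)) = cis (-\<xi>) ^ Suc t"
proof -
  have "snd (psi a b c d M \<xi> t (-1)) = exp (\<i> * of_real (\<xi> * (- 1 - of_nat t)))"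
    using psi_snd_left_of_strip[of "-1"] by simp
  also have "\<xi> * (- 1 - of_nat t) = real (Suc t) * (-\<xi>)" by (simp add: algebra_simps)
  also have "exp (\<i> * of_real (real (Suc t) * (-\<xi>))) = cis (-\<xi>) ^ Suc t"
    by (simp only: cis_conv_exp[symmetric] Complex.DeMoivre)
  finally show ?thesis .
qed

definition scale_pair :: "complex \<Rightarrow> complex \<times> complex \<Rightarrow> complex \<times> complex" where
  "scale_pair \<mu> v = (\<mu> * fst v, \<mu> * snd v)"

lemma norm_scale_pair: "norm (scale_pair \<mu> v) = cmod \<mu> * norm v"
proof -
  have "(norm (scale_pair \<mu> v))\<^sup>2 = (cmod \<mu> * norm v)\<^sup>2"
    unfolding scale_pair_def by (simp add: power2_norm_prod norm_mult algebra_simps)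
  then show ?thesis by simp
qed

context unitary_coin
begin

lemma killed_step_scale_pair:
  "killed_step M (\<lambda>i. scale_pair \<mu> (v i)) j = scale_pair \<mu> (killed_step M v j)"
  unfolding killed_step_def coin_L_def coin_R_def scale_pair_def by (simp add: algebra_simps)

lemma killed_step_cong:
  "(\<And>i. i < M \<Longrightarrow> v i = w i) \<Longrightarrow> j < M \<Longrightarrow> killed_step M v j = killed_step M w j"
  unfolding killed_step_def by auto

lemma killed_step_no_unimodular_eigenvector:
  assumes unimodular: "cmod \<mu> = 1"
    and eigen: "\<And>j. j < M \<Longrightarrow> killed_step M u j = scale_pair \<mu> (u j)" and j: "j < M"
  shows "u j = 0"
proof -
  have iter: "\<forall>j<M. (killed_step M ^^ t) u j = scale_pair (\<mu> ^ t) (u j)" for t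
  proof (induction t)
    case (Suc t)
    show ?case
    proof (intro allI impI)
      fix j assume j: "j < M"
      have "(killed_step M ^^ Suc t) u j = killed_step M ((killed_step M ^^ t) u) j" by simp
      also have "\<dots> = killed_step M (\<lambda>i. scale_pair (\<mu> ^ t) (u i)) j"
        using Suc j by (intro killed_step_cong) auto
      also have "\<dots> = scale_pair (\<mu> ^ Suc t) (u j)"
        unfolding killed_step_scale_pair eigen[OF j] by (simp add: scale_pair_def)
      finally show "(killed_step M ^^ Suc t) u j = scale_pair (\<mu> ^ Suc t) (u j)" .
    qed
  qed (simp add: scale_pair_def)
  have "(\<lambda>t. norm ((killed_step M ^^ t) u j)) \<longlonglongrightarrow> 0"
    using killed_iter_tendsto_0[OF j, of u] by (simp add: tendsto_norm_zero_iff)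
  moreover have "norm ((killed_step M ^^ t) u j) = norm (u j)" for t
    using iter j unimodular by (simp add: norm_scale_pair norm_power)
  ultimately show ?thesis by (simp add: LIMSEQ_const_iff)
qed

text \<open>\<open>\<Phi>\<close> is stationary, up to the phase \<open>e\<^sup>-\<^sup>i\<^sup>\<xi>\<close> per step, for the walk fed by the
  plane wave, whose inflow enters the R-amplitude of site 0.\<close>
definition stationary_state :: "nat \<Rightarrow> real \<Rightarrow> (nat \<Rightarrow> complex \<times> complex) \<Rightarrow> bool" where
  "stationary_state M \<xi> \<Phi> \<longleftrightarrow>
     (\<forall>j<M. killed_step M \<Phi> j + (if j = 0 then (0, cis (- \<xi>)) else 0) = scale_pair (cis (- \<xi>)) (\<Phi> j))"

lemma stationary_stateD:
  assumes "stationary_state M \<xi> \<Phi>" "j < M"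
  shows "fst (killed_step M \<Phi> j) = cis (- \<xi>) * fst (\<Phi> j)"
    and "0 < j \<Longrightarrow> snd (killed_step M \<Phi> j) = cis (- \<xi>) * snd (\<Phi> j)"
    and "snd (\<Phi> 0) = 1"
proof -
  have eq: "killed_step M \<Phi> j + (if j = 0 then (0, cis (- \<xi>)) else 0) = scale_pair (cis (- \<xi>)) (\<Phi> j)"
    using assms unfolding stationary_state_def by blast
  show "fst (killed_step M \<Phi> j) = cis (- \<xi>) * fst (\<Phi> j)"
    using arg_cong[OF eq, of fst] by (simp add: scale_pair_def split: if_splits)
  show "0 < j \<Longrightarrow> snd (killed_step M \<Phi> j) = cis (- \<xi>) * snd (\<Phi> j)"
    using arg_cong[OF eq, of snd] by (simp add: scale_pair_def)
  have "killed_step M \<Phi> 0 + (0, cis (- \<xi>)) = scale_pair (cis (- \<xi>)) (\<Phi> 0)"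
    using assms unfolding stationary_state_def by auto
  then show "snd (\<Phi> 0) = 1"
    by (simp add: scale_pair_def killed_step_def prod_eq_iff)
qed

lemma psi_Suc_stationary:
  assumes \<Phi>: "stationary_state M \<xi> \<Phi>" and j: "j < M"
    and strip: "\<And>i. i < M \<Longrightarrow> psi a b c d M \<xi> t (int i) = scale_pair (cis (- \<xi>) ^ t) (\<Phi> i) + D i"
  shows "psi a b c d M \<xi> (Suc t) (int j) = scale_pair (cis (- \<xi>) ^ Suc t) (\<Phi> j) + killed_step M D j"
proof -
  let ?rot = "cis (- \<xi>)"
  let ?\<psi> = "psi a b c d M \<xi>"
  have "fst (?\<psi> (Suc t) (int j)) = ?rot ^ Suc t * fst (\<Phi> j) + fst (killed_step M D j)"
  proof (cases "Suc j < M")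
    case True
    have e: "int j + 1 = int (Suc j)" by simp
    have "fst (?\<psi> (Suc t) (int j)) = coin_L (?\<psi> t (int (Suc j)))"
      unfolding psi_Suc walk_step_def e using True by (simp add: coin_apply_def coin_L_def)
    also have "\<dots> = ?rot ^ t * coin_L (\<Phi> (Suc j)) + coin_L (D (Suc j))"
      unfolding strip[OF True] by (simp add: coin_L_def scale_pair_def algebra_simps)
    also have "\<dots> = ?rot ^ Suc t * fst (\<Phi> j) + fst (killed_step M D j)"
      using stationary_stateD(1)[OF \<Phi> j] True by (simp add: killed_step_def)
    finally show ?thesis .
  next
    case False
    then have e: "int j + 1 = int M" using j by simp
    have "fst (?\<psi> (Suc t) (int j)) = 0"
      unfolding psi_Suc walk_step_def e by (simp add: coin_apply_def psi_fst_right_of_strip)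
    moreover have "fst (\<Phi> j) = 0"
      using stationary_stateD(1)[OF \<Phi> j] False by (simp add: killed_step_def)
    ultimately show ?thesis using False by (simp add: killed_step_def)
  qed
  moreover have "snd (?\<psi> (Suc t) (int j)) = ?rot ^ Suc t * snd (\<Phi> j) + snd (killed_step M D j)"
  proof (cases "0 < j")
    case True
    have e: "int j - 1 = int (j - 1)" using True by simp
    have "snd (?\<psi> (Suc t) (int j)) = coin_R (?\<psi> t (int (j - 1)))"
      unfolding psi_Suc walk_step_def e using True j by (simp add: coin_apply_def coin_R_def)
    also have "\<dots> = ?rot ^ t * coin_R (\<Phi> (j - 1)) + coin_R (D (j - 1))"
      using j strip[of "j - 1"] by (simp add: coin_R_def scale_pair_def algebra_simps)
    also have "\<dots> = ?rot ^ Suc t * snd (\<Phi> j) + snd (killed_step M D j)"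
      using stationary_stateD(2)[OF \<Phi> j True] True by (simp add: killed_step_def)
    finally show ?thesis .
  next
    case False
    then have "snd (?\<psi> (Suc t) (int j)) = snd (?\<psi> t (-1))"
      by (simp add: psi_Suc walk_step_def coin_apply_def)
    also have "\<dots> = ?rot ^ Suc t" by (rule psi_inflow)
    finally show ?thesis
      using False stationary_stateD(3)[OF \<Phi> j] by (simp add: killed_step_def)
  qed
  ultimately show ?thesis by (simp add: scale_pair_def prod_eq_iff)
qed

lemma psi_stationary_decomposition:
  assumes "stationary_state M \<xi> \<Phi>"
  shows "j < M \<Longrightarrow> psi a b c d M \<xi> t (int j) =
    scale_pair (cis (- \<xi>) ^ t) (\<Phi> j) + (killed_step M ^^ t) (\<lambda>i. psi_init \<xi> (int i) - \<Phi> i) j"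
proof (induction t arbitrary: j)
  case 0
  then show ?case by (simp add: scale_pair_def psi_def)
next
  case (Suc t)
  then show ?case using psi_Suc_stationary[OF assms] by simp
qed

lemma comfort_stationary_state:
  assumes \<Phi>: "stationary_state M \<xi> \<Phi>" and j: "j < M"
  shows "comfort a b c d M \<xi> j = (norm (\<Phi> j))\<^sup>2 / (\<Sum>k<M. (norm (\<Phi> k))\<^sup>2)"
proof -
  let ?\<psi> = "psi a b c d M \<xi>"
  let ?e = "\<lambda>i. psi_init \<xi> (int i) - \<Phi> i"
  have norm_lim: "(\<lambda>t. norm (?\<psi> t (int i))) \<longlonglongrightarrow> norm (\<Phi> i)" if i: "i < M" for i
  proof -
    have bound: "norm (norm (?\<psi> t (int i)) - norm (\<Phi> i)) \<le> norm ((killed_step M ^^ t) ?e i)" for t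
      using norm_triangle_ineq3[of "scale_pair (cis (- \<xi>) ^ t) (\<Phi> i) + (killed_step M ^^ t) ?e i"
          "scale_pair (cis (- \<xi>) ^ t) (\<Phi> i)"]
      unfolding psi_stationary_decomposition[OF \<Phi> i] by (simp add: norm_scale_pair norm_power)
    have decay: "(\<lambda>t. norm ((killed_step M ^^ t) ?e i)) \<longlonglongrightarrow> 0"
      using killed_iter_tendsto_0[OF i] by (simp add: tendsto_norm_zero_iff)
    have "(\<lambda>t. norm (?\<psi> t (int i)) - norm (\<Phi> i)) \<longlonglongrightarrow> 0"
      by (rule Lim_null_comparison[OF always_eventually decay]) (use bound in auto)
    then show ?thesis by (rule LIM_zero_cancel)
  qed
  have "0 < M" using j by simp
  have "1 \<le> (norm (\<Phi> 0))\<^sup>2"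
    using stationary_stateD(3)[OF \<Phi> \<open>0 < M\<close>] by (simp add: power2_norm_prod)
  also have "\<dots> \<le> (\<Sum>k<M. (norm (\<Phi> k))\<^sup>2)"
    using \<open>0 < M\<close> by (intro member_le_sum) auto
  finally have den: "(\<Sum>k<M. (norm (\<Phi> k))\<^sup>2) \<noteq> 0" by simp
  have normsq_lim: "(\<lambda>t. normsq (?\<psi> t (int i))) \<longlonglongrightarrow> (norm (\<Phi> i))\<^sup>2" if "i < M" for i
    unfolding normsq_def power2_norm_prod[symmetric] by (intro tendsto_power norm_lim that)
  have "(\<lambda>t. normsq (?\<psi> t (int j)) / (\<Sum>k<M. normsq (?\<psi> t (int k))))
        \<longlonglongrightarrow> (norm (\<Phi> j))\<^sup>2 / (\<Sum>k<M. (norm (\<Phi> k))\<^sup>2)"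
    by (intro tendsto_divide normsq_lim j tendsto_sum den) auto
  then show ?thesis unfolding comfort_def using j by (simp add: limI)
qed

end

section \<open>Chebyshev weights\<close>

text \<open>\<open>cheb_U \<kappa> k\<close> is the Chebyshev polynomial of the second kind \<open>U\<^sub>k\<^sub>-\<^sub>1(\<kappa>)\<close>; with this
  index shift \<open>cheb_U (cos \<theta>) k = sin (k \<theta>) / sin \<theta>\<close>.\<close>
fun cheb_U :: "real \<Rightarrow> nat \<Rightarrow> real" where
  "cheb_U \<kappa> 0 = 0"
| "cheb_U \<kappa> (Suc 0) = 1"
| "cheb_U \<kappa> (Suc (Suc k)) = 2 * \<kappa> * cheb_U \<kappa> (Suc k) - cheb_U \<kappa> k"

lemma cheb_U_uminus: "cheb_U (- \<kappa>) k = (-1) ^ (k + 1) * cheb_U \<kappa> k"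
  by (induction \<kappa> k rule: cheb_U.induct) (auto simp: algebra_simps)

definition site_weight :: "real \<Rightarrow> real \<Rightarrow> nat \<Rightarrow> real" where
  "site_weight \<kappa> \<epsilon> k =
     (cheb_U \<kappa> k)\<^sup>2 + (cheb_U \<kappa> (k - 1))\<^sup>2 - 2 * \<epsilon> * \<kappa> * cheb_U \<kappa> k * cheb_U \<kappa> (k - 1)"

definition weight_sum :: "real \<Rightarrow> real \<Rightarrow> nat \<Rightarrow> real" where
  "weight_sum \<kappa> \<epsilon> K = (\<Sum>k<K. site_weight \<kappa> \<epsilon> (Suc k))"

lemma site_weight_abs: "site_weight \<bar>\<kappa>\<bar> \<epsilon> k = site_weight \<kappa> \<epsilon> k"
proof (cases "0 \<le> \<kappa> \<or> k = 0")
  case False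
  then obtain m where k: "k = Suc m" and \<kappa>: "\<bar>\<kappa>\<bar> = - \<kappa>" by (cases k) auto
  have sign: "((-1::real) ^ m)\<^sup>2 = 1" "(-1::real) ^ (Suc m + 1) * (-1) ^ (m + 1) = -1"
    by (simp_all add: power_add[symmetric] power2_eq_square)
  have "site_weight \<bar>\<kappa>\<bar> \<epsilon> k = (cheb_U \<kappa> (Suc m))\<^sup>2 + (cheb_U \<kappa> m)\<^sup>2
      - 2 * \<epsilon> * (-\<kappa>) * (((-1) ^ (Suc m + 1) * (-1) ^ (m + 1)) * cheb_U \<kappa> (Suc m) * cheb_U \<kappa> m)"
    unfolding site_weight_def \<kappa> cheb_U_uminus k by (simp add: algebra_simps sign)
  also have "\<dots> = site_weight \<kappa> \<epsilon> k" unfolding sign site_weight_def k by simp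
  finally show ?thesis .
qed (auto simp: site_weight_def)

lemma site_weight_ge:
  assumes "0 \<le> \<epsilon> * \<kappa>"
  shows "(1 - \<epsilon> * \<kappa>) * ((cheb_U \<kappa> k)\<^sup>2 + (cheb_U \<kappa> (k - 1))\<^sup>2) \<le> site_weight \<kappa> \<epsilon> k"
proof -
  have "2 * (cheb_U \<kappa> k * cheb_U \<kappa> (k - 1)) \<le> (cheb_U \<kappa> k)\<^sup>2 + (cheb_U \<kappa> (k - 1))\<^sup>2"
    using zero_le_power2[of "cheb_U \<kappa> k - cheb_U \<kappa> (k - 1)"] by (simp add: power2_diff)
  from mult_left_mono[OF this assms] show ?thesis
    unfolding site_weight_def by (simp add: algebra_simps)
qed

lemma site_weight_nonneg:
  assumes "0 \<le> \<epsilon> * \<kappa>" "\<epsilon> * \<kappa> \<le> 1"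
  shows "0 \<le> site_weight \<kappa> \<epsilon> k"
  using site_weight_ge[OF assms(1), of k] assms(2) by (smt (verit) mult_nonneg_nonneg zero_le_power2)

lemma weight_sum_abs: "weight_sum \<bar>\<kappa>\<bar> \<epsilon> K = weight_sum \<kappa> \<epsilon> K"
  by (simp add: weight_sum_def site_weight_abs)

lemma weight_sum_nonneg: "0 \<le> \<epsilon> * \<kappa> \<Longrightarrow> \<epsilon> * \<kappa> \<le> 1 \<Longrightarrow> 0 \<le> weight_sum \<kappa> \<epsilon> K"
  unfolding weight_sum_def by (auto intro: sum_nonneg site_weight_nonneg)

lemma weight_sum_pos:
  assumes "0 \<le> \<epsilon> * \<kappa>" "\<epsilon> * \<kappa> \<le> 1" "0 < K"
  shows "0 < weight_sum \<kappa> \<epsilon> K"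
proof -
  have "site_weight \<kappa> \<epsilon> (Suc 0) \<le> weight_sum \<kappa> \<epsilon> K"
    unfolding weight_sum_def using assms by (intro member_le_sum site_weight_nonneg) auto
  then show ?thesis by (simp add: site_weight_def)
qed

lemma weight_sum_add:
  "weight_sum \<kappa> \<epsilon> (K + m) = weight_sum \<kappa> \<epsilon> K + (\<Sum>i<m. site_weight \<kappa> \<epsilon> (Suc (K + i)))"
  by (induction m) (auto simp: weight_sum_def)

lemma sum_site_weight_reflect: "(\<Sum>k<M. site_weight \<kappa> \<epsilon> (M - k)) = weight_sum \<kappa> \<epsilon> M"
proof -
  have "(\<Sum>k<M. site_weight \<kappa> \<epsilon> (M - k)) = (\<Sum>k<M. site_weight \<kappa> \<epsilon> (Suc (M - Suc k)))"
    by (intro sum.cong) (auto simp: Suc_diff_Suc)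
  also have "\<dots> = weight_sum \<kappa> \<epsilon> M" unfolding weight_sum_def by (rule sum.nat_diff_reindex)
  finally show ?thesis .
qed

lemma sum_site_weight_initial:
  assumes "n < M"
  shows "(\<Sum>j\<le>n. site_weight \<kappa> \<epsilon> (M - j)) = weight_sum \<kappa> \<epsilon> M - weight_sum \<kappa> \<epsilon> (M - n - 1)"
proof -
  define K where "K = M - n - 1"
  have M: "M = K + Suc n" using assms unfolding K_def by simp
  have "(\<Sum>j\<le>n. site_weight \<kappa> \<epsilon> (M - j))
      = (\<Sum>j<Suc n. (\<lambda>i. site_weight \<kappa> \<epsilon> (Suc (K + i))) (Suc n - Suc j))"
    unfolding lessThan_Suc_atMost M by (intro sum.cong) (auto simp: Suc_diff_le)
  also have "\<dots> = (\<Sum>i<Suc n. site_weight \<kappa> \<epsilon> (Suc (K + i)))" by (rule sum.nat_diff_reindex)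
  also have "\<dots> = weight_sum \<kappa> \<epsilon> M - weight_sum \<kappa> \<epsilon> K" unfolding M weight_sum_add by simp
  finally show ?thesis unfolding K_def .
qed

lemma cmod_of_real_cis_diff_squared:
  "(cmod (of_real \<alpha> * cis y - of_real \<beta>))\<^sup>2 = \<alpha>\<^sup>2 - 2 * \<alpha> * \<beta> * cos y + \<beta>\<^sup>2"
proof -
  have "(cmod (of_real \<alpha> * cis y - of_real \<beta>))\<^sup>2 = (\<alpha> * cos y - \<beta>)\<^sup>2 + (\<alpha> * sin y)\<^sup>2"
    by (simp add: cmod_power2)
  also have "\<dots> = \<alpha>\<^sup>2 * ((sin y)\<^sup>2 + (cos y)\<^sup>2) - 2 * \<alpha> * \<beta> * cos y + \<beta>\<^sup>2"
    by algebra
  finally show ?thesis by simp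
qed

context unitary_coin
begin

definition sqrt_det :: complex where
  "sqrt_det = cis (Arg coin_det / 2)"

definition kappa :: "real \<Rightarrow> real" where
  "kappa \<xi> = cos (omega_of a b c d \<xi>) / cmod a"

definition twist :: complex where
  "twist = a / (of_real (cmod a) * sqrt_det)"

text \<open>The amplitudes at site \<open>M - k\<close> of the stationary state, found by solving the eigenvalue
  equations from the right end of the strip, where the L-amplitude vanishes. Eliminating the
  R-amplitudes leaves a three-term recurrence with trace \<open>2 \<kappa>\<close>, hence Chebyshev numbers.\<close>
definition profile_L :: "real \<Rightarrow> nat \<Rightarrow> complex" where
  "profile_L \<xi> k = twist ^ k * of_real (cheb_U (kappa \<xi>) (k - 1)) * b / a"

definition profile_R :: "real \<Rightarrow> nat \<Rightarrow> complex" where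
  "profile_R \<xi> k = twist ^ k *
     (of_real (cheb_U (kappa \<xi>) k) * cis (- omega_of a b c d \<xi>) / of_real (cmod a)
      - of_real (cheb_U (kappa \<xi>) (k - 1)))"

lemma sqrt_det_squared: "sqrt_det * sqrt_det = coin_det"
proof -
  have "coin_det \<noteq> 0" using norm_coin_det by auto
  then have "sqrt_det * sqrt_det = sgn coin_det"
    unfolding sqrt_det_def cis_mult by (simp add: cis_Arg)
  also have "\<dots> = coin_det" using norm_coin_det by (simp add: sgn_eq)
  finally show ?thesis .
qed

lemma cis_eq_sqrt_det_cis_omega: "cis (- \<xi>) = sqrt_det * cis (- omega_of a b c d \<xi>)"
  unfolding sqrt_det_def omega_of_def coin_det_def[symmetric] cis_mult by simp

lemma twist_unimodular: "cmod twist = 1"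
  unfolding twist_def sqrt_det_def using a_nonzero by (simp add: norm_divide norm_mult)

lemma profile_L_recurrence:
  "cis (- \<xi>) * profile_L \<xi> (Suc k) = a * profile_L \<xi> k + b * profile_R \<xi> k"
proof -
  define z where "z = cis (- omega_of a b c d \<xi>)"
  define \<rho> where "\<rho> = complex_of_real (cmod a)"
  define T where "T = twist ^ k"
  define X where "X = complex_of_real (cheb_U (kappa \<xi>) k)"
  define Y where "Y = complex_of_real (cheb_U (kappa \<xi>) (k - 1))"
  have \<rho>: "\<rho> \<noteq> 0" and h: "sqrt_det \<noteq> 0" using a_nonzero unfolding \<rho>_def sqrt_det_def by simp_all
  have rot: "cis (- \<xi>) = sqrt_det * z" unfolding z_def by (rule cis_eq_sqrt_det_cis_omega)
  have rot_twist: "cis (- \<xi>) * twist = a * z / \<rho>"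
    unfolding rot twist_def \<rho>_def[symmetric] using h \<rho> by (simp add: field_simps)
  have "cis (- \<xi>) * profile_L \<xi> (Suc k) = T * (cis (- \<xi>) * twist) * X * b / a"
    unfolding profile_L_def T_def X_def by (simp add: power_Suc2 algebra_simps)
  also have "\<dots> = T * (b * X * z / \<rho>)"
    unfolding rot_twist using a_nonzero by simp
  also have "\<dots> = a * (T * Y * b / a) + b * (T * (X * z / \<rho> - Y))"
    using a_nonzero by (simp add: algebra_simps)
  also have "\<dots> = a * profile_L \<xi> k + b * profile_R \<xi> k"
    unfolding profile_L_def profile_R_def T_def X_def Y_def z_def \<rho>_def ..
  finally show ?thesis .
qed

lemma lower_row_twist:
  "c * twist * b / a = - sqrt_det * (1 - of_real (cmod a) * of_real (cmod a)) / of_real (cmod a)"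
  "d * twist = sqrt_det * of_real (cmod a)"
proof -
  define \<rho> where "\<rho> = complex_of_real (cmod a)"
  define h where "h = sqrt_det"
  \<comment> \<open>\<open>coin_det\<close> and \<open>twist\<close> depend on \<open>c\<close> and \<open>d\<close>: they are frozen before \<open>c\<close>, \<open>d\<close> are rewritten.\<close>
  define D where "D = coin_det"
  define tw where "tw = twist"
  have \<rho>: "\<rho> \<noteq> 0" and h: "h \<noteq> 0" using a_nonzero unfolding \<rho>_def h_def sqrt_det_def by simp_all
  have aa: "a * cnj a = \<rho> * \<rho>"
    unfolding \<rho>_def by (simp add: complex_norm_square[symmetric] power2_eq_square)
  have bb: "b * cnj b = 1 - \<rho> * \<rho>" using row_norms(1) aa by (metis add_diff_cancel_left')
  have tw: "tw = a / (\<rho> * h)" unfolding tw_def twist_def \<rho>_def h_def ..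
  have hh: "D = h * h" unfolding h_def D_def sqrt_det_squared ..
  have c: "c = - D * cnj b" and d: "d = D * cnj a" unfolding D_def by (fact lower_row_eq)+
  have "c * tw * b / a = - h * (b * cnj b) / \<rho>"
    unfolding c tw hh using a_nonzero h \<rho> by (simp add: field_simps)
  then show "c * twist * b / a = - sqrt_det * (1 - of_real (cmod a) * of_real (cmod a)) / of_real (cmod a)"
    unfolding bb tw_def h_def \<rho>_def .
  have "d * tw = h * \<rho>"
    unfolding d tw hh using a_nonzero h \<rho> aa by (simp add: field_simps)
  then show "d * twist = sqrt_det * of_real (cmod a)" unfolding tw_def h_def \<rho>_def .
qed

lemma cis_omega_quadratic:
  "cis (- omega_of a b c d \<xi>) * cis (- omega_of a b c d \<xi>) + 1
    = 2 * of_real (cmod a) * of_real (kappa \<xi>) * cis (- omega_of a b c d \<xi>)"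
proof -
  define z where "z = cis (- omega_of a b c d \<xi>)"
  have "z * cnj z = 1" "z + cnj z = 2 * complex_of_real (cos (omega_of a b c d \<xi>))"
    unfolding z_def by (simp_all add: cis_cnj cis_mult complex_eq_iff)
  moreover have "complex_of_real (cos (omega_of a b c d \<xi>)) = of_real (cmod a) * of_real (kappa \<xi>)"
    unfolding kappa_def using a_nonzero by simp
  ultimately have "z * z + 1 = 2 * of_real (cmod a) * of_real (kappa \<xi>) * z"
    by (metis distrib_left mult.assoc mult.commute mult.left_commute mult_1)
  then show ?thesis unfolding z_def .
qed

lemma profile_R_recurrence:
  assumes "1 \<le> k"
  shows "cis (- \<xi>) * profile_R \<xi> k = c * profile_L \<xi> (Suc k) + d * profile_R \<xi> (Suc k)"
proof -
  define z where "z = cis (- omega_of a b c d \<xi>)"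
  define \<rho> where "\<rho> = complex_of_real (cmod a)"
  define T where "T = twist ^ k"
  define X where "X = complex_of_real (cheb_U (kappa \<xi>) k)"
  define Y where "Y = complex_of_real (cheb_U (kappa \<xi>) (k - 1))"
  define Z where "Z = complex_of_real (cheb_U (kappa \<xi>) (Suc k))"
  have \<rho>: "\<rho> \<noteq> 0" using a_nonzero unfolding \<rho>_def by simp
  have Z: "Z = 2 * complex_of_real (kappa \<xi>) * X - Y"
    using assms unfolding X_def Y_def Z_def by (cases k) auto
  have "c * profile_L \<xi> (Suc k) + d * profile_R \<xi> (Suc k)
      = T * (X * (c * twist * b / a) + (d * twist) * (Z * z / \<rho> - X))"
    unfolding profile_L_def profile_R_def T_def X_def Z_def z_def \<rho>_def
    by (simp add: power_Suc2 algebra_simps)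
  also have "\<dots> = T * sqrt_det * (Z * z - X / \<rho>)"
    unfolding lower_row_twist \<rho>_def[symmetric] using \<rho> by (simp add: field_simps)
  also have "Z * z - X / \<rho> = z * (X * z / \<rho> - Y)"
  proof -
    have "X * (z * z + 1) = X * (2 * \<rho> * complex_of_real (kappa \<xi>) * z)"
      unfolding z_def \<rho>_def cis_omega_quadratic ..
    then have "X * (\<rho> * (z * (2 * complex_of_real (kappa \<xi>)))) = X + X * (z * z)" by algebra
    then show ?thesis unfolding Z using \<rho> by (simp add: field_simps)
  qed
  also have "T * sqrt_det * (z * (X * z / \<rho> - Y)) = (sqrt_det * z) * profile_R \<xi> k"
    unfolding profile_R_def T_def X_def Y_def z_def \<rho>_def by (simp add: algebra_simps)
  also have "sqrt_det * z = cis (- \<xi>)" unfolding z_def by (rule cis_eq_sqrt_det_cis_omega[symmetric])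
  finally show ?thesis ..
qed

lemma profile_R_1_nonzero: "profile_R \<xi> 1 \<noteq> 0"
  using a_nonzero twist_unimodular by (auto simp: profile_R_def)

lemma profile_eigen_equation:
  assumes j: "j < M"
  shows "killed_step M (\<lambda>i. (profile_L \<xi> (M - i), profile_R \<xi> (M - i))) j
      + (if j = 0 then (0, cis (- \<xi>) * profile_R \<xi> M) else 0)
    = scale_pair (cis (- \<xi>)) (profile_L \<xi> (M - j), profile_R \<xi> (M - j))"
proof -
  have L: "(if Suc j < M then coin_L (profile_L \<xi> (M - Suc j), profile_R \<xi> (M - Suc j)) else 0)
      = cis (- \<xi>) * profile_L \<xi> (M - j)"
  proof (cases "Suc j < M")
    case True
    then have "M - j = Suc (M - Suc j)" by simp
    then show ?thesis using True by (simp add: coin_L_def profile_L_recurrence)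
  next
    case False
    then have "M - j = 1" using j by simp
    then show ?thesis using False by (simp add: profile_L_def)
  qed
  have R: "0 < j \<Longrightarrow> coin_R (profile_L \<xi> (M - (j - 1)), profile_R \<xi> (M - (j - 1)))
      = cis (- \<xi>) * profile_R \<xi> (M - j)"
  proof -
    assume "0 < j"
    then have "M - (j - 1) = Suc (M - j)" "1 \<le> M - j" using j by simp_all
    then show ?thesis by (simp add: coin_R_def profile_R_recurrence)
  qed
  show ?thesis
    using L R by (simp add: killed_step_def scale_pair_def prod_eq_iff)
qed

lemma profile_R_nonzero:
  assumes "0 < M"
  shows "profile_R \<xi> M \<noteq> 0"
proof
  assume R: "profile_R \<xi> M = 0"
  define u where "u i = (profile_L \<xi> (M - i), profile_R \<xi> (M - i))" for i
  have eigen: "killed_step M u j = scale_pair (cis (- \<xi>)) (u j)" if "j < M" for j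
  proof -
    have "(if j = 0 then (0, cis (- \<xi>) * profile_R \<xi> M) else 0) = (0 :: complex \<times> complex)"
      using R by (simp add: zero_prod_def[symmetric])
    then show ?thesis using profile_eigen_equation[OF that, of \<xi>] unfolding u_def by simp
  qed
  have "u (M - 1) = 0"
    by (rule killed_step_no_unimodular_eigenvector[OF _ eigen]) (use assms in auto)
  with assms show False using profile_R_1_nonzero by (simp add: u_def prod_eq_iff)
qed

lemma stationary_state_profile:
  assumes "0 < M"
  shows "stationary_state M \<xi> (\<lambda>j. scale_pair (1 / profile_R \<xi> M) (profile_L \<xi> (M - j), profile_R \<xi> (M - j)))"
  unfolding stationary_state_def
proof (intro allI impI)
  fix j assume j: "j < M"
  define \<beta> where "\<beta> = 1 / profile_R \<xi> M"
  define u where "u i = (profile_L \<xi> (M - i), profile_R \<xi> (M - i))" for i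
  have inflow: "scale_pair \<beta> (if j = 0 then (0, cis (- \<xi>) * profile_R \<xi> M) else 0)
      = (if j = 0 then (0, cis (- \<xi>)) else 0)"
    using profile_R_nonzero[OF assms] unfolding \<beta>_def
    by (cases "j = 0") (simp_all add: scale_pair_def zero_prod_def[symmetric])
  have "killed_step M (\<lambda>i. scale_pair \<beta> (u i)) j + (if j = 0 then (0, cis (- \<xi>)) else 0)
      = scale_pair \<beta> (killed_step M u j + (if j = 0 then (0, cis (- \<xi>) * profile_R \<xi> M) else 0))"
    unfolding killed_step_scale_pair inflow[symmetric] by (simp add: scale_pair_def algebra_simps)
  also have "\<dots> = scale_pair \<beta> (scale_pair (cis (- \<xi>)) (u j))"
    unfolding u_def profile_eigen_equation[OF j] ..
  also have "\<dots> = scale_pair (cis (- \<xi>)) (scale_pair \<beta> (u j))"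
    by (simp add: scale_pair_def)
  finally show "killed_step M (\<lambda>i. scale_pair \<beta> (profile_L \<xi> (M - i), profile_R \<xi> (M - i))) j
      + (if j = 0 then (0, cis (- \<xi>)) else 0)
    = scale_pair (cis (- \<xi>)) (scale_pair \<beta> (profile_L \<xi> (M - j), profile_R \<xi> (M - j)))"
    unfolding u_def .
qed

lemma norm_profile:
  "(norm (profile_L \<xi> k, profile_R \<xi> k))\<^sup>2 = site_weight (kappa \<xi>) ((cmod a)\<^sup>2) k / (cmod a)\<^sup>2"
proof -
  let ?U = "cheb_U (kappa \<xi>)"
  have "(cmod (profile_L \<xi> k))\<^sup>2 = (?U (k - 1))\<^sup>2 * (1 - (cmod a)\<^sup>2) / (cmod a)\<^sup>2"
    using row_norms_real(1) twist_unimodular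
    by (simp add: profile_L_def norm_mult norm_divide norm_power power_mult_distrib power_divide)
  moreover have "(cmod (profile_R \<xi> k))\<^sup>2
      = (?U k / cmod a)\<^sup>2 - 2 * (?U k / cmod a) * ?U (k - 1) * cos (omega_of a b c d \<xi>) + (?U (k - 1))\<^sup>2"
  proof -
    have "cmod (profile_R \<xi> k) =
        cmod (of_real (?U k / cmod a) * cis (- omega_of a b c d \<xi>) - of_real (?U (k - 1)))"
      unfolding profile_R_def norm_mult norm_power twist_unimodular by simp
    then show ?thesis by (simp only: cmod_of_real_cis_diff_squared cos_minus)
  qed
  ultimately show ?thesis
    using a_nonzero unfolding power2_norm_prod site_weight_def kappa_def
    by (simp add: field_simps power2_eq_square)
qed

lemma kappa_scaled_bounds: "0 \<le> (cmod a)\<^sup>2 * \<bar>kappa \<xi>\<bar>" "(cmod a)\<^sup>2 * \<bar>kappa \<xi>\<bar> \<le> cmod a"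
proof -
  have "(cmod a)\<^sup>2 * \<bar>kappa \<xi>\<bar> = cmod a * \<bar>cos (omega_of a b c d \<xi>)\<bar>"
    unfolding kappa_def using a_nonzero by (simp add: power2_eq_square abs_divide)
  also have "\<dots> \<le> cmod a" by (rule mult_left_le) (auto simp: abs_cos_le_one)
  finally show "(cmod a)\<^sup>2 * \<bar>kappa \<xi>\<bar> \<le> cmod a" .
qed simp

lemma comfort_formula:
  assumes "j < M"
  shows "comfort a b c d M \<xi> j =
    site_weight (\<bar>kappa \<xi>\<bar>) ((cmod a)\<^sup>2) (M - j) / weight_sum (\<bar>kappa \<xi>\<bar>) ((cmod a)\<^sup>2) M"
proof -
  have M: "0 < M" using assms by simp
  let ?\<beta> = "1 / profile_R \<xi> M"
  let ?w = "\<lambda>k. site_weight (kappa \<xi>) ((cmod a)\<^sup>2) k"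
  have norm: "(norm (scale_pair ?\<beta> (profile_L \<xi> (M - i), profile_R \<xi> (M - i))))\<^sup>2
      = (cmod ?\<beta>)\<^sup>2 * (?w (M - i) / (cmod a)\<^sup>2)" for i
    unfolding norm_scale_pair power_mult_distrib norm_profile ..
  have "comfort a b c d M \<xi> j = ?w (M - j) / (\<Sum>k<M. ?w (M - k))"
    unfolding comfort_stationary_state[OF stationary_state_profile[OF M] assms] norm
      sum_distrib_left[symmetric] sum_divide_distrib[symmetric]
    using profile_R_nonzero[OF M] a_nonzero by simp
  also have "(\<Sum>k<M. ?w (M - k)) = weight_sum (kappa \<xi>) ((cmod a)\<^sup>2) M"
    by (rule sum_site_weight_reflect)
  finally show ?thesis unfolding site_weight_abs weight_sum_abs .
qed

lemma comfort_nonneg: "0 \<le> comfort a b c d M \<xi> j"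
proof (cases "j < M")
  case True
  then show ?thesis
    using kappa_scaled_bounds[of \<xi>] norm_entries_le_1(1)
    by (simp add: comfort_formula site_weight_nonneg weight_sum_nonneg)
qed (simp add: comfort_def)

end

section \<open>Distribution functions\<close>

lemma cdf_scaled_law_sum:
  assumes nonneg: "\<And>j. 0 \<le> comfort a b c d M \<xi> j"
  shows "cdf (scaled_law a b c d M \<xi>) x = (\<Sum>j | j < M \<and> real j / real M \<le> x. comfort a b c d M \<xi> j)"
proof -
  let ?w = "comfort a b c d M \<xi>"
  let ?N = "density (count_space UNIV) (\<lambda>j. ennreal (?w j))"
  let ?f = "\<lambda>j::nat. real j / real M"
  let ?S = "{j. j < M \<and> real j / real M \<le> x}"
  have "emeasure (distr ?N borel ?f) {..x} = emeasure ?N (?f -` {..x} \<inter> space ?N)"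
    by (rule emeasure_distr) simp_all
  also have "\<dots> = (\<integral>\<^sup>+ j. ennreal (?w j) * indicator (?f -` {..x}) j \<partial>count_space UNIV)"
    by (subst emeasure_density) auto
  also have "\<dots> = (\<Sum>j\<in>?S. ennreal (?w j) * indicator (?f -` {..x}) j)"
  proof (rule nn_integral_count_space')
    fix j assume "j \<notin> ?S"
    then show "ennreal (?w j) * indicator (?f -` {..x}) j = 0"
      by (cases "j < M") (auto simp: comfort_def indicator_def)
  qed simp_all
  also have "\<dots> = ennreal (\<Sum>j\<in>?S. ?w j)"
    using nonneg by (simp add: indicator_def sum_nonneg)
  finally show ?thesis
    unfolding cdf_def measure_def scaled_law_def using nonneg by (simp add: sum_nonneg)
qed

context unitary_coin
begin

text \<open>For \<open>0 \<le> x < 1\<close> this is the probability that \<open>X\<^sub>M / M > x\<close>.\<close>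
definition tail_ratio :: "real \<Rightarrow> nat \<Rightarrow> real \<Rightarrow> real" where
  "tail_ratio \<xi> M x = weight_sum (\<bar>kappa \<xi>\<bar>) ((cmod a)\<^sup>2) (M - nat \<lfloor>x * real M\<rfloor> - 1)
     / weight_sum (\<bar>kappa \<xi>\<bar>) ((cmod a)\<^sup>2) M"

lemma cdf_scaled_law:
  assumes M: "0 < M"
  shows "cdf (scaled_law a b c d M \<xi>) x =
    (if x < 0 then 0 else if 1 \<le> x then 1 else 1 - tail_ratio \<xi> M x)"
proof -
  define W where "W = weight_sum \<bar>kappa \<xi>\<bar> ((cmod a)\<^sup>2)"
  let ?S = "{j. j < M \<and> real j / real M \<le> x}"
  let ?w = "site_weight \<bar>kappa \<xi>\<bar> ((cmod a)\<^sup>2)"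
  have W_pos: "0 < W M"
    unfolding W_def using kappa_scaled_bounds[of \<xi>] norm_entries_le_1(1) M
    by (intro weight_sum_pos) auto
  have cdf: "cdf (scaled_law a b c d M \<xi>) x = (\<Sum>j\<in>?S. comfort a b c d M \<xi> j)"
    by (rule cdf_scaled_law_sum[OF comfort_nonneg])
  have sum: "(\<Sum>j\<in>A. comfort a b c d M \<xi> j) = (\<Sum>j\<in>A. ?w (M - j)) / W M" if "A \<subseteq> {..<M}" for A
    unfolding sum_divide_distrib W_def using that by (intro sum.cong refl comfort_formula) auto
  consider "x < 0" | "1 \<le> x" | "0 \<le> x" "x < 1" by linarith
  then show ?thesis
  proof cases
    case 1
    then have S: "?S = {}" by (auto simp: not_le intro: less_le_trans[OF _ divide_nonneg_nonneg])
    show ?thesis unfolding cdf S using 1 by simp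
  next
    case 2
    have le1: "real j / real M \<le> 1" if "j < M" for j using that M by (simp add: divide_le_eq)
    have "real j / real M \<le> x" if "j < M" for j using le1[OF that] 2 by linarith
    then have S: "?S = {..<M}" by auto
    have "(\<Sum>j\<in>?S. comfort a b c d M \<xi> j) = W M / W M"
      unfolding S sum[OF order_refl] unfolding W_def sum_site_weight_reflect ..
    then show ?thesis unfolding cdf using 2 W_pos by simp
  next
    case 3
    define n where "n = nat \<lfloor>x * real M\<rfloor>"
    have "x * real M < real M" using 3 M by simp
    then have n: "n < M" unfolding n_def using 3 by (simp add: nat_less_iff floor_less_iff)
    have "?S = {..n}"
      using 3 M by (auto simp: n_def divide_le_eq le_nat_iff le_floor_iff intro: order.strict_trans1[OF _ n])
    then have "(\<Sum>j\<in>?S. comfort a b c d M \<xi> j) = (W M - W (M - n - 1)) / W M"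
      using n sum[of "{..n}"] sum_site_weight_initial[OF n] unfolding W_def by auto
    then show ?thesis unfolding cdf tail_ratio_def W_def[symmetric] n_def using 3 W_pos
      by (simp add: field_simps)
  qed
qed

end

lemma cdf_law_with_density:
  fixes g F :: "real \<Rightarrow> real"
  assumes g: "g \<in> borel_measurable borel"
    and F: "\<And>t. 0 \<le> t \<Longrightarrow> t \<le> 1 \<Longrightarrow> (F has_real_derivative g t) (at t)"
    and g_nonneg: "\<And>t. 0 \<le> t \<Longrightarrow> t \<le> 1 \<Longrightarrow> 0 \<le> g t"
  shows "cdf (law_with_density g) x = (if x < 0 then 0 else F (min x 1) - F 0)"
proof -
  let ?h = "\<lambda>t. ennreal (indicator {0..1} t * g t)"
  have "emeasure (law_with_density g) {..x} = (\<integral>\<^sup>+ t. ?h t * indicator {..x} t \<partial>lborel)"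
    unfolding law_with_density_def using g by (intro emeasure_density) simp_all
  also have "\<dots> = (if x < 0 then 0 else ennreal (F (min x 1) - F 0))"
  proof (cases "x < 0")
    case True
    then have "(\<lambda>t. ?h t * indicator {..x} t) = (\<lambda>t. 0)" by (auto simp: indicator_def fun_eq_iff)
    then show ?thesis using True by simp
  next
    case False
    have "?h t * indicator {..x} t = ennreal (g t) * indicator {0 .. min x 1} t" for t
      by (auto simp: indicator_def)
    moreover have "(\<integral>\<^sup>+ t. ennreal (g t) * indicator {0 .. min x 1} t \<partial>lborel) = ennreal (F (min x 1) - F 0)"
      by (rule nn_integral_FTC_Icc[OF g]) (use False F g_nonneg in auto)
    ultimately show ?thesis using False by simp
  qed
  finally have "emeasure (law_with_density g) {..x} = (if x < 0 then 0 else ennreal (F (min x 1) - F 0))" .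
  moreover have "F 0 \<le> F (min x 1)" if "0 \<le> x"
    by (rule DERIV_nonneg_imp_nondecreasing[of 0 "min x 1" F])
       (use that F g_nonneg in \<open>auto intro!: exI\<close>)
  ultimately show ?thesis unfolding cdf_def measure_def by auto
qed

lemma cdf_cubic_law:
  "cdf (law_with_density (\<lambda>x. 3 * (1 - x)\<^sup>2)) x = (if x < 0 then 0 else if 1 \<le> x then 1 else 1 - (1 - x) ^ 3)"
proof -
  have "cdf (law_with_density (\<lambda>x. 3 * (1 - x)\<^sup>2)) x
      = (if x < 0 then 0 else (1 - (1 - min x 1) ^ 3) - (1 - (1 - 0) ^ 3))"
    by (rule cdf_law_with_density)
       (auto intro!: derivative_eq_intros borel_measurable_continuous_onI continuous_intros
             simp: power2_eq_square)
  then show ?thesis by auto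
qed

lemma cdf_uniform_law:
  "cdf (law_with_density (\<lambda>x. 1)) x = (if x < 0 then 0 else if 1 \<le> x then 1 else x)"
proof -
  have "cdf (law_with_density (\<lambda>x. 1)) x = (if x < 0 then 0 else min x 1 - 0)"
    by (rule cdf_law_with_density) (auto intro!: derivative_eq_intros)
  then show ?thesis by auto
qed

lemma sin_less_self:
  fixes x :: real
  assumes "0 < x"
  shows "sin x < x"
proof (cases "x < 2")
  case True
  have "0 < sin (x / 2)" using assms True pi_gt3 by (intro sin_gt_zero) auto
  moreover have "cos (x / 2) < 1" using assms True cos_double_less_one[of "x / 4"] by simp
  ultimately have "sin x < 2 * sin (x / 2)"
    using sin_double[of "x / 2"] by (simp add: mult_less_cancel_left_pos)
  also have "\<dots> \<le> x" using sin_x_le_x[of "x / 2"] assms by simp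
  finally show ?thesis .
qed (use sin_le_one[of x] in linarith)

lemma cdf_sine_law:
  assumes \<theta>: "0 < \<theta>"
  shows "cdf (law_with_density (\<lambda>x. 2 / (1 - sin (2 * \<theta>) / (2 * \<theta>)) * (sin ((1 - x) * \<theta>))\<^sup>2)) x =
    (if x < 0 then 0 else if 1 \<le> x then 1 else
       1 - ((1 - x) - sin (2 * (1 - x) * \<theta>) / (2 * \<theta>)) / (1 - sin (2 * \<theta>) / (2 * \<theta>)))"
proof -
  define C where "C = 2 / (1 - sin (2 * \<theta>) / (2 * \<theta>))"
  define F where "F t = C * (t / 2 + sin (2 * (1 - t) * \<theta>) / (4 * \<theta>))" for t
  have "sin (2 * \<theta>) / (2 * \<theta>) < 1" using sin_less_self[of "2 * \<theta>"] \<theta> by simp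
  then have C: "0 < C" unfolding C_def by simp
  have F': "(F has_real_derivative C * (sin ((1 - t) * \<theta>))\<^sup>2) (at t)" for t
  proof -
    have "(F has_real_derivative C * (1 / 2 + cos (2 * (1 - t) * \<theta>) * (- 2 * \<theta>) / (4 * \<theta>))) (at t)"
      unfolding F_def by (auto intro!: derivative_eq_intros simp: algebra_simps)
    moreover have "1 / 2 + cos (2 * (1 - t) * \<theta>) * (- 2 * \<theta>) / (4 * \<theta>) = (sin ((1 - t) * \<theta>))\<^sup>2"
      using cos_double_sin[of "(1 - t) * \<theta>"] \<theta> by (simp add: field_simps)
    ultimately show ?thesis by simp
  qed
  have "cdf (law_with_density (\<lambda>x. C * (sin ((1 - x) * \<theta>))\<^sup>2)) x
      = (if x < 0 then 0 else F (min x 1) - F 0)"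
    by (rule cdf_law_with_density) (use F' C in \<open>auto intro!: borel_measurable_continuous_onI continuous_intros\<close>)
  moreover have "F t - F 0 = 1 - ((1 - t) - sin (2 * (1 - t) * \<theta>) / (2 * \<theta>)) / (1 - sin (2 * \<theta>) / (2 * \<theta>))"
    for t
  proof -
    define D where "D = 1 - sin (2 * \<theta>) / (2 * \<theta>)"
    have D: "D \<noteq> 0" and S: "sin (2 * \<theta>) = 2 * \<theta> * (1 - D)"
      unfolding D_def using \<open>sin (2 * \<theta>) / (2 * \<theta>) < 1\<close> \<theta> by simp_all
    have "F t - F 0 = 2 / D * (t / 2 + sin (2 * (1 - t) * \<theta>) / (4 * \<theta>)) - 2 / D * (sin (2 * \<theta>) / (4 * \<theta>))"
      unfolding F_def C_def D_def by simp
    also have "\<dots> = 1 - ((1 - t) - sin (2 * (1 - t) * \<theta>) / (2 * \<theta>)) / D"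
      unfolding S using D \<theta> by (simp add: field_simps)
    finally show ?thesis unfolding D_def .
  qed
  ultimately show ?thesis unfolding C_def by (auto simp: min_def)
qed

lemma cdf_return_0: "cdf (return borel 0) x = (if x < 0 then 0 else (1::real))"
  unfolding cdf_def by (simp add: measure_return indicator_def)

lemma isCont_cdf_return_0: "isCont (cdf (return borel 0)) x \<Longrightarrow> x \<noteq> (0::real)"
proof -
  interpret real_distribution "return borel (0::real)"
    by (simp add: real_distribution_def real_distribution_axioms_def prob_space_return)
  show "isCont (cdf (return borel 0)) x \<Longrightarrow> x \<noteq> 0"
    using isCont_cdf by (auto simp: measure_return)
qed

context unitary_coin
begin

lemma weak_conv_scaled_law:
  fixes \<xi> :: "nat \<Rightarrow> real" and \<mu> :: "real measure" and L :: "real \<Rightarrow> real"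
  assumes tail: "\<And>x. 0 \<le> x \<Longrightarrow> x < 1 \<Longrightarrow> isCont (cdf \<mu>) x \<Longrightarrow>
      (\<lambda>M. tail_ratio (\<xi> M) M x) \<longlonglongrightarrow> L x"
    and cdf_\<mu>: "\<And>x. cdf \<mu> x = (if x < 0 then 0 else if 1 \<le> x then 1 else 1 - L x)"
  shows "weak_conv_m (\<lambda>M. scaled_law a b c d M (\<xi> M)) \<mu>"
  unfolding weak_conv_m_def weak_conv_def
proof (intro allI impI)
  fix x :: real
  assume cont: "isCont (cdf \<mu>) x"
  let ?F = "\<lambda>M. if x < 0 then 0 else if 1 \<le> x then 1 else 1 - tail_ratio (\<xi> M) M x"
  have "?F \<longlonglongrightarrow> cdf \<mu> x"
  proof (cases "0 \<le> x \<and> x < 1")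
    case True
    then show ?thesis unfolding cdf_\<mu> using tail[OF _ _ cont] by (auto intro: tendsto_diff)
  qed (auto simp: cdf_\<mu>)
  moreover have "\<forall>\<^sub>F M in sequentially. ?F M = cdf (scaled_law a b c d M (\<xi> M)) x"
    using eventually_gt_at_top[of 0] by eventually_elim (simp add: cdf_scaled_law)
  ultimately show "(\<lambda>M. cdf (scaled_law a b c d M (\<xi> M)) x) \<longlonglongrightarrow> cdf \<mu> x"
    by (rule Lim_transform_eventually)
qed

end

section \<open>Asymptotics of the weight sums\<close>

lemma cheb_U_cos:
  assumes "sin \<theta> \<noteq> 0"
  shows "cheb_U (cos \<theta>) k = sin (real k * \<theta>) / sin \<theta>"
proof -
  have "cheb_U (cos \<theta>) k = sin (real k * \<theta>) / sin \<theta> \<and>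
        cheb_U (cos \<theta>) (Suc k) = sin (real (Suc k) * \<theta>) / sin \<theta>"
  proof (induction k)
    case (Suc k)
    have "sin (real (Suc (Suc k)) * \<theta>) = 2 * sin (real (Suc k) * \<theta>) * cos \<theta> - sin (real k * \<theta>)"
      using sin_add[of "real (Suc k) * \<theta>" \<theta>] sin_diff[of "real (Suc k) * \<theta>" \<theta>]
      by (simp add: algebra_simps)
    then show ?case using Suc assms by (simp add: field_simps)
  qed (use assms in simp)
  then show ?thesis ..
qed

lemma site_weight_cos:
  assumes "sin \<theta> \<noteq> 0"
  shows "site_weight (cos \<theta>) \<epsilon> (Suc m) * (sin \<theta>)\<^sup>2
       = (1 - \<epsilon> * (cos \<theta>)\<^sup>2) - (1 - \<epsilon>) * cos \<theta> * cos ((2 * real m + 1) * \<theta>)"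
proof -
  define \<alpha> where "\<alpha> = real (Suc m) * \<theta>"
  define \<beta> where "\<beta> = real m * \<theta>"
  have angles: "\<alpha> + \<beta> = (2 * real m + 1) * \<theta>" "\<alpha> - \<beta> = \<theta>"
    unfolding \<alpha>_def \<beta>_def by (simp_all add: algebra_simps)
  have squares: "(sin \<alpha>)\<^sup>2 + (sin \<beta>)\<^sup>2 = 1 - cos (\<alpha> + \<beta>) * cos (\<alpha> - \<beta>)"
  proof -
    have "cos (\<alpha> + \<beta>) * cos (\<alpha> - \<beta>) = (cos \<alpha>)\<^sup>2 * (cos \<beta>)\<^sup>2 - (sin \<alpha>)\<^sup>2 * (sin \<beta>)\<^sup>2"
      by (simp add: cos_add cos_diff power2_eq_square algebra_simps)
    also have "\<dots> = (1 - (sin \<alpha>)\<^sup>2) * (1 - (sin \<beta>)\<^sup>2) - (sin \<alpha>)\<^sup>2 * (sin \<beta>)\<^sup>2"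
      by (simp add: cos_squared_eq)
    finally show ?thesis by (simp add: algebra_simps)
  qed
  have product: "2 * sin \<alpha> * sin \<beta> = cos (\<alpha> - \<beta>) - cos (\<alpha> + \<beta>)"
    by (simp add: cos_add cos_diff)
  have "site_weight (cos \<theta>) \<epsilon> (Suc m) * (sin \<theta>)\<^sup>2
      = (sin \<alpha>)\<^sup>2 + (sin \<beta>)\<^sup>2 - \<epsilon> * cos \<theta> * (2 * sin \<alpha> * sin \<beta>)"
    unfolding site_weight_def cheb_U_cos[OF assms] \<alpha>_def \<beta>_def using assms
    by (simp add: field_simps power2_eq_square)
  also have "\<dots> = (1 - \<epsilon> * (cos \<theta>)\<^sup>2) - (1 - \<epsilon>) * cos \<theta> * cos ((2 * real m + 1) * \<theta>)"
    unfolding squares product angles by (simp add: algebra_simps power2_eq_square)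
  finally show ?thesis .
qed

definition weight_sum_trig :: "real \<Rightarrow> real \<Rightarrow> nat \<Rightarrow> real" where
  "weight_sum_trig \<theta> \<epsilon> K =
     real K * (1 - \<epsilon> * (cos \<theta>)\<^sup>2) - (1 - \<epsilon>) * cos \<theta> * sin (2 * real K * \<theta>) / (2 * sin \<theta>)"

lemma weight_sum_cos:
  assumes s: "sin \<theta> \<noteq> 0"
  shows "weight_sum (cos \<theta>) \<epsilon> K * (sin \<theta>)\<^sup>2 = weight_sum_trig \<theta> \<epsilon> K"
proof (induction K)
  case (Suc K)
  have "sin (2 * real (Suc K) * \<theta>) = sin (2 * real K * \<theta>) + 2 * cos ((2 * real K + 1) * \<theta>) * sin \<theta>"
    using sin_add[of "(2 * real K + 1) * \<theta>" \<theta>] sin_diff[of "(2 * real K + 1) * \<theta>" \<theta>]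
    by (simp add: algebra_simps)
  then have "weight_sum_trig \<theta> \<epsilon> (Suc K) = weight_sum_trig \<theta> \<epsilon> K
      + ((1 - \<epsilon> * (cos \<theta>)\<^sup>2) - (1 - \<epsilon>) * cos \<theta> * cos ((2 * real K + 1) * \<theta>))"
    unfolding weight_sum_trig_def using s by (simp add: field_simps)
  then show ?case
    using Suc site_weight_cos[OF s, of \<epsilon> K] by (simp add: weight_sum_def algebra_simps)
qed (simp add: weight_sum_def weight_sum_trig_def)

lemma cheb_U_1: "cheb_U 1 k = real k"
proof -
  have "cheb_U 1 k = real k \<and> cheb_U 1 (Suc k) = real (Suc k)"
    by (induction k) auto
  then show ?thesis ..
qed

lemma weight_sum_1:
  "weight_sum 1 \<epsilon> K = 2 * (1 - \<epsilon>) / 3 * (real K + 1) * real K * (real K - 1) + real K"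
proof (induction K)
  case (Suc K)
  have "site_weight 1 \<epsilon> (Suc K) = 2 * (1 - \<epsilon>) * (real K + 1) * real K + 1"
    unfolding site_weight_def cheb_U_1 by (simp add: power2_eq_square algebra_simps)
  then show ?case using Suc by (simp add: weight_sum_def field_simps)
qed (simp add: weight_sum_def)

text \<open>For \<open>\<kappa> > 1\<close> the Chebyshev numbers grow like \<open>growth\<^sup>k\<close>, \<open>growth\<close> being the larger root of
  \<open>r\<^sup>2 - 2 \<kappa> r + 1\<close>; hence the last few sites carry almost all of \<open>weight_sum\<close>.\<close>

locale cheb_hyperbolic =
  fixes \<kappa> :: real
  assumes gt_1: "1 < \<kappa>"
begin

definition growth :: real where
  "growth = \<kappa> + sqrt (\<kappa>\<^sup>2 - 1)"

lemma growth_gt_1: "1 < growth"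
  using gt_1 unfolding growth_def by (smt (verit) real_sqrt_ge_zero one_le_power)

lemma inverse_growth: "2 * \<kappa> - growth = 1 / growth"
proof -
  have "(\<kappa> + sqrt (\<kappa>\<^sup>2 - 1)) * (\<kappa> - sqrt (\<kappa>\<^sup>2 - 1)) = 1"
    using gt_1 by (simp add: algebra_simps power2_eq_square[symmetric])
  then show ?thesis using growth_gt_1 unfolding growth_def by (simp add: field_simps)
qed

lemma cheb_U_growth_defect: "cheb_U \<kappa> (Suc k) - growth * cheb_U \<kappa> k = (1 / growth) ^ k"
proof (induction k)
  case (Suc k)
  have "cheb_U \<kappa> (Suc (Suc k)) - growth * cheb_U \<kappa> (Suc k)
      = (2 * \<kappa> - growth) * cheb_U \<kappa> (Suc k) - cheb_U \<kappa> k"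
    by (simp add: algebra_simps)
  also have "\<dots> = (1 / growth) * (cheb_U \<kappa> (Suc k) - growth * cheb_U \<kappa> k)"
    unfolding inverse_growth using growth_gt_1 by (simp add: field_simps)
  finally show ?case using Suc by simp
qed simp

lemma cheb_U_nonneg: "0 \<le> cheb_U \<kappa> k" and cheb_U_growth: "growth * cheb_U \<kappa> k \<le> cheb_U \<kappa> (Suc k)"
proof -
  have "0 \<le> cheb_U \<kappa> k \<and> growth * cheb_U \<kappa> k \<le> cheb_U \<kappa> (Suc k)"
  proof (induction k)
    case (Suc k)
    then have "0 \<le> cheb_U \<kappa> (Suc k)" using growth_gt_1 by (smt (verit) mult_nonneg_nonneg)
    moreover have "0 \<le> (1 / growth) ^ Suc k" using growth_gt_1 by simp
    ultimately show ?case using cheb_U_growth_defect[of "Suc k"] by linarith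
  qed simp
  then show "0 \<le> cheb_U \<kappa> k" "growth * cheb_U \<kappa> k \<le> cheb_U \<kappa> (Suc k)" by auto
qed

lemma cheb_U_power_growth: "growth ^ m * cheb_U \<kappa> k \<le> cheb_U \<kappa> (k + m)"
proof (induction m)
  case (Suc m)
  have "growth ^ Suc m * cheb_U \<kappa> k \<le> growth * cheb_U \<kappa> (k + m)"
    using Suc growth_gt_1 by (simp add: mult_left_mono)
  also have "\<dots> \<le> cheb_U \<kappa> (k + Suc m)" using cheb_U_growth[of "k + m"] by simp
  finally show ?case .
qed simp

lemma cheb_U_mono: "cheb_U \<kappa> k \<le> cheb_U \<kappa> (Suc k)"
proof -
  have "cheb_U \<kappa> k \<le> growth * cheb_U \<kappa> k"
    using cheb_U_nonneg[of k] growth_gt_1 by (simp add: mult_le_cancel_right1)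
  then show ?thesis using cheb_U_growth[of k] by linarith
qed

lemma site_weight_le:
  assumes "0 \<le> \<epsilon>"
  shows "site_weight \<kappa> \<epsilon> k \<le> 2 * (cheb_U \<kappa> k)\<^sup>2"
proof -
  have "cheb_U \<kappa> (k - 1) \<le> cheb_U \<kappa> k"
    using cheb_U_mono[of "k - 1"] by (cases k) auto
  then have "(cheb_U \<kappa> (k - 1))\<^sup>2 \<le> (cheb_U \<kappa> k)\<^sup>2" using cheb_U_nonneg by (intro power_mono) auto
  moreover have "0 \<le> \<epsilon> * \<kappa> * cheb_U \<kappa> k * cheb_U \<kappa> (k - 1)" using assms gt_1 cheb_U_nonneg by simp
  ultimately show ?thesis unfolding site_weight_def by simp
qed

lemma weight_sum_le:
  assumes "0 \<le> \<epsilon>"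
  shows "weight_sum \<kappa> \<epsilon> K \<le> 2 * (cheb_U \<kappa> K)\<^sup>2 / (1 - 1 / growth\<^sup>2)"
proof -
  let ?q = "1 / growth\<^sup>2"
  have q: "0 \<le> ?q" "?q < 1" using growth_gt_1 by auto
  have tail: "(cheb_U \<kappa> (Suc k))\<^sup>2 \<le> (cheb_U \<kappa> K)\<^sup>2 * ?q ^ (K - Suc k)" if "k < K" for k
  proof -
    have "growth ^ (K - Suc k) * cheb_U \<kappa> (Suc k) \<le> cheb_U \<kappa> K"
      using cheb_U_power_growth[of "K - Suc k" "Suc k"] that by simp
    then have "(growth ^ (K - Suc k) * cheb_U \<kappa> (Suc k))\<^sup>2 \<le> (cheb_U \<kappa> K)\<^sup>2"
      using cheb_U_nonneg growth_gt_1 by (intro power_mono) auto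
    then have "(growth\<^sup>2) ^ (K - Suc k) * (cheb_U \<kappa> (Suc k))\<^sup>2 \<le> (cheb_U \<kappa> K)\<^sup>2"
      by (simp add: power_mult_distrib power_mult[symmetric] mult.commute)
    moreover have "0 < (growth\<^sup>2) ^ (K - Suc k)" using growth_gt_1 by simp
    ultimately show ?thesis by (simp add: field_simps power_divide)
  qed
  have "weight_sum \<kappa> \<epsilon> K \<le> (\<Sum>k<K. 2 * ((cheb_U \<kappa> K)\<^sup>2 * ?q ^ (K - Suc k)))"
    unfolding weight_sum_def using site_weight_le[OF assms] tail
    by (intro sum_mono) (smt (verit) lessThan_iff)
  also have "\<dots> = 2 * (cheb_U \<kappa> K)\<^sup>2 * (\<Sum>k<K. ?q ^ (K - Suc k))"
    by (simp add: sum_distrib_left algebra_simps)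
  also have "(\<Sum>k<K. ?q ^ (K - Suc k)) = (\<Sum>k<K. ?q ^ k)" by (rule sum.nat_diff_reindex)
  also have "\<dots> = (1 - ?q ^ K) / (1 - ?q)"
  proof -
    have "?q \<noteq> 1" using q(2) by linarith
    then show ?thesis by (simp only: sum_gp_strict if_False)
  qed
  also have "2 * (cheb_U \<kappa> K)\<^sup>2 * \<dots> \<le> 2 * (cheb_U \<kappa> K)\<^sup>2 * (1 / (1 - ?q))"
    using q by (intro mult_left_mono divide_right_mono) auto
  finally show ?thesis by simp
qed

lemma weight_sum_ratio_le:
  assumes \<epsilon>: "0 \<le> \<epsilon>" "\<epsilon> * \<kappa> < 1" and "K \<le> M" "0 < M"
  shows "weight_sum \<kappa> \<epsilon> K / weight_sum \<kappa> \<epsilon> M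
    \<le> 2 / ((1 - 1 / growth\<^sup>2) * (1 - \<epsilon> * \<kappa>)) * (1 / growth\<^sup>2) ^ (M - K)"
proof -
  let ?q = "1 / growth\<^sup>2"
  have q: "0 \<le> ?q" "?q < 1" using growth_gt_1 by auto
  have e: "0 < 1 - \<epsilon> * \<kappa>" "0 \<le> \<epsilon> * \<kappa>" using \<epsilon> gt_1 by auto
  have W_M: "(1 - \<epsilon> * \<kappa>) * (cheb_U \<kappa> M)\<^sup>2 \<le> weight_sum \<kappa> \<epsilon> M"
  proof -
    have "(1 - \<epsilon> * \<kappa>) * (cheb_U \<kappa> M)\<^sup>2 \<le> site_weight \<kappa> \<epsilon> M"
      using site_weight_ge[OF e(2), of M] e(1) by (smt (verit) mult_left_mono zero_le_power2)
    also have "\<dots> \<le> weight_sum \<kappa> \<epsilon> M"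
    proof -
      obtain m where m: "M = Suc m" using \<open>0 < M\<close> by (cases M) auto
      show ?thesis unfolding weight_sum_def m using e by (intro member_le_sum site_weight_nonneg) auto
    qed
    finally show ?thesis .
  qed
  have U: "(growth\<^sup>2) ^ (M - K) * (cheb_U \<kappa> K)\<^sup>2 \<le> (cheb_U \<kappa> M)\<^sup>2"
  proof -
    have "growth ^ (M - K) * cheb_U \<kappa> K \<le> cheb_U \<kappa> M"
      using cheb_U_power_growth[of "M - K" K] \<open>K \<le> M\<close> by simp
    then have "(growth ^ (M - K) * cheb_U \<kappa> K)\<^sup>2 \<le> (cheb_U \<kappa> M)\<^sup>2"
      using cheb_U_nonneg growth_gt_1 by (intro power_mono) auto
    then show ?thesis by (simp add: power_mult_distrib power_mult[symmetric] mult.commute)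
  qed
  have W_pos: "0 < weight_sum \<kappa> \<epsilon> M" using weight_sum_pos e \<open>0 < M\<close> by simp
  show ?thesis
  proof (cases "cheb_U \<kappa> K = 0")
    case True
    then have "weight_sum \<kappa> \<epsilon> K \<le> 0" using weight_sum_le[OF \<epsilon>(1), of K] by simp
    moreover have "0 \<le> 2 / ((1 - ?q) * (1 - \<epsilon> * \<kappa>)) * ?q ^ (M - K)" using q e by simp
    ultimately show ?thesis using W_pos by (smt (verit) divide_nonpos_pos)
  next
    case False
    then have U_pos: "0 < (cheb_U \<kappa> K)\<^sup>2" by simp
    have "weight_sum \<kappa> \<epsilon> K / weight_sum \<kappa> \<epsilon> M
        \<le> (2 * (cheb_U \<kappa> K)\<^sup>2 / (1 - ?q)) / ((1 - \<epsilon> * \<kappa>) * ((growth\<^sup>2) ^ (M - K) * (cheb_U \<kappa> K)\<^sup>2))"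
    proof (rule frac_le)
      show "weight_sum \<kappa> \<epsilon> K \<le> 2 * (cheb_U \<kappa> K)\<^sup>2 / (1 - ?q)" by (rule weight_sum_le[OF \<epsilon>(1)])
      show "(1 - \<epsilon> * \<kappa>) * ((growth\<^sup>2) ^ (M - K) * (cheb_U \<kappa> K)\<^sup>2) \<le> weight_sum \<kappa> \<epsilon> M"
        using W_M U e by (smt (verit) mult_left_mono)
    qed (use q e U_pos growth_gt_1 in auto)
    also have "\<dots> = 2 / ((1 - ?q) * (1 - \<epsilon> * \<kappa>)) * (1 / (growth\<^sup>2) ^ (M - K))"
    proof -
      have "2 * U / Q / (E * (R * U)) = 2 / (Q * E) * (1 / R)"
        if "U \<noteq> 0" "Q \<noteq> 0" "E \<noteq> 0" "R \<noteq> 0" for U Q E R :: real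
        using that by (simp add: field_simps)
      then show ?thesis using U_pos e q growth_gt_1 by simp
    qed
    also have "\<dots> = 2 / ((1 - ?q) * (1 - \<epsilon> * \<kappa>)) * ?q ^ (M - K)"
      by (simp add: power_one_over)
    finally show ?thesis .
  qed
qed

end

lemma LIMSEQ_divide_common_scale:
  fixes f g h :: "nat \<Rightarrow> real"
  assumes "(\<lambda>M. f M / h M) \<longlonglongrightarrow> A" "(\<lambda>M. g M / h M) \<longlonglongrightarrow> B" "B \<noteq> 0"
    and "\<forall>\<^sub>F M in sequentially. h M \<noteq> 0"
  shows "(\<lambda>M. f M / g M) \<longlonglongrightarrow> A / B"
proof -
  have "(\<lambda>M. (f M / h M) / (g M / h M)) \<longlonglongrightarrow> A / B"
    using assms by (intro tendsto_divide) auto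
  moreover have "\<forall>\<^sub>F M in sequentially. (f M / h M) / (g M / h M) = f M / g M"
    using assms(4) by eventually_elim simp
  ultimately show ?thesis by (rule Lim_transform_eventually)
qed

lemma real_div_self_LIMSEQ: "(\<lambda>M. real M / real M) \<longlonglongrightarrow> 1"
  by (rule Lim_transform_eventually[OF tendsto_const])
     (use eventually_gt_at_top[of 0] in \<open>eventually_elim, simp\<close>)

lemma tail_index_ratio_LIMSEQ:
  assumes "0 \<le> x" "x < 1"
  shows "(\<lambda>M. real (M - nat \<lfloor>x * real M\<rfloor> - 1) / real M) \<longlonglongrightarrow> 1 - x"
proof -
  have "\<forall>\<^sub>F M in sequentially.
      \<bar>real (M - nat \<lfloor>x * real M\<rfloor> - 1) / real M - (1 - x)\<bar> \<le> 1 / real M"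
    using eventually_gt_at_top[of 0]
  proof eventually_elim
    case (elim M)
    define n where "n = nat \<lfloor>x * real M\<rfloor>"
    have n: "real n \<le> x * real M" "x * real M < real n + 1"
      unfolding n_def using assms by (simp_all add: of_nat_nat)
    have "x * real M < real M" using assms elim by simp
    then have "real (M - n - 1) = real M - real n - 1" using n by (simp add: of_nat_diff)
    moreover have "\<bar>(real M - real n - 1) / real M - (1 - x)\<bar> = \<bar>x * real M - real n - 1\<bar> / real M"
      using elim by (simp add: field_simps)
    moreover have "\<dots> \<le> 1 / real M" using n elim by (intro divide_right_mono) auto
    ultimately show ?case unfolding n_def by simp
  qed
  then have "(\<lambda>M. real (M - nat \<lfloor>x * real M\<rfloor> - 1) / real M - (1 - x)) \<longlonglongrightarrow> 0"
    by (intro Lim_null_comparison[OF _ lim_inverse_n']) simp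
  then show ?thesis by (rule LIM_zero_cancel)
qed

lemma tail_index_gap_at_top:
  assumes "0 < x" "x < 1"
  shows "filterlim (\<lambda>M. M - (M - nat \<lfloor>x * real M\<rfloor> - 1)) at_top sequentially"
proof -
  have "filterlim (\<lambda>M. x * real M) at_top sequentially"
    using assms by (intro filterlim_tendsto_pos_mult_at_top[OF tendsto_const] filterlim_real_sequentially)
  then have floor: "filterlim (\<lambda>M. nat \<lfloor>x * real M\<rfloor>) at_top sequentially"
    by (intro filterlim_compose[OF filterlim_nat_sequentially] filterlim_compose[OF filterlim_floor_sequentially])
  have le: "nat \<lfloor>x * real M\<rfloor> \<le> M - (M - nat \<lfloor>x * real M\<rfloor> - 1)" for M
  proof -
    have "x * real M \<le> real M" using assms by (simp add: mult_left_le_one_le)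
    then have "nat \<lfloor>x * real M\<rfloor> \<le> M" by (simp add: nat_le_iff floor_le_iff)
    then show ?thesis by arith
  qed
  show ?thesis by (rule filterlim_at_top_mono[OF floor]) (use le in \<open>auto intro!: always_eventually\<close>)
qed

lemma weight_sum_ratio_hyperbolic:
  assumes \<kappa>: "1 < \<kappa>" and \<epsilon>: "0 \<le> \<epsilon>" "\<epsilon> * \<kappa> < 1"
    and K: "\<And>M. K M \<le> M" and gap: "filterlim (\<lambda>M. M - K M) at_top sequentially"
  shows "(\<lambda>M. weight_sum \<kappa> \<epsilon> (K M) / weight_sum \<kappa> \<epsilon> M) \<longlonglongrightarrow> 0"
proof -
  interpret cheb_hyperbolic \<kappa> using \<kappa> by unfold_locales
  let ?q = "1 / growth\<^sup>2"
  let ?C = "2 / ((1 - ?q) * (1 - \<epsilon> * \<kappa>))"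
  have "norm ?q < 1" using growth_gt_1 by simp
  then have "(\<lambda>M. ?q ^ (M - K M)) \<longlonglongrightarrow> 0"
    by (rule filterlim_compose[OF LIMSEQ_power_zero gap])
  then have lim: "(\<lambda>M. ?C * ?q ^ (M - K M)) \<longlonglongrightarrow> 0"
    by (rule tendsto_mult_right_zero)
  show ?thesis
  proof (rule tendsto_sandwich[OF _ _ tendsto_const lim])
    show "\<forall>\<^sub>F M in sequentially. 0 \<le> weight_sum \<kappa> \<epsilon> (K M) / weight_sum \<kappa> \<epsilon> M"
      using \<epsilon> \<kappa> by (intro always_eventually allI divide_nonneg_nonneg weight_sum_nonneg) auto
    show "\<forall>\<^sub>F M in sequentially. weight_sum \<kappa> \<epsilon> (K M) / weight_sum \<kappa> \<epsilon> M \<le> ?C * ?q ^ (M - K M)"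
      using eventually_gt_at_top[of 0] by eventually_elim (rule weight_sum_ratio_le[OF \<epsilon> K])
  qed
qed

lemma weight_sum_ratio_parabolic:
  assumes K: "(\<lambda>M. real (K M) / real M) \<longlonglongrightarrow> y" and \<epsilon>: "\<epsilon> < 1"
  shows "(\<lambda>M. weight_sum 1 \<epsilon> (K M) / weight_sum 1 \<epsilon> M) \<longlonglongrightarrow> y ^ 3"
proof -
  have scaled: "(\<lambda>M. weight_sum 1 \<epsilon> (N M) / real M ^ 3) \<longlonglongrightarrow> 2 * (1 - \<epsilon>) / 3 * z ^ 3"
    if N: "(\<lambda>M. real (N M) / real M) \<longlonglongrightarrow> z" for N z
  proof -
    let ?n = "\<lambda>M. real (N M) / real M" and ?i = "\<lambda>M. 1 / real M"
    have "(\<lambda>M. 2 * (1 - \<epsilon>) / 3 * ((?n M + ?i M) * ?n M * (?n M - ?i M)) + ?n M * ?i M * ?i M)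
        \<longlonglongrightarrow> 2 * (1 - \<epsilon>) / 3 * ((z + 0) * z * (z - 0)) + z * 0 * 0"
      by (intro tendsto_intros N lim_inverse_n')
    moreover have "\<forall>\<^sub>F M in sequentially.
        2 * (1 - \<epsilon>) / 3 * ((?n M + ?i M) * ?n M * (?n M - ?i M)) + ?n M * ?i M * ?i M
        = weight_sum 1 \<epsilon> (N M) / real M ^ 3"
      using eventually_gt_at_top[of 0]
      by eventually_elim (simp add: weight_sum_1 field_simps power3_eq_cube)
    ultimately show ?thesis by (simp add: Lim_transform_eventually power3_eq_cube)
  qed
  have "(\<lambda>M. weight_sum 1 \<epsilon> (K M) / weight_sum 1 \<epsilon> M)
      \<longlonglongrightarrow> (2 * (1 - \<epsilon>) / 3 * y ^ 3) / (2 * (1 - \<epsilon>) / 3 * 1 ^ 3)"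
    by (rule LIMSEQ_divide_common_scale[OF scaled[OF K] scaled[OF real_div_self_LIMSEQ]])
       (use \<epsilon> eventually_gt_at_top[of 0] in auto)
  then show ?thesis using \<epsilon> by simp
qed

lemma sin_ge_third:
  fixes x :: real
  assumes "0 \<le> x" "x \<le> 2"
  shows "x / 3 \<le> sin x"
proof -
  have "(\<Sum>m<3. sin_coeff m * x ^ m) = x"
    by (simp add: numeral_3_eq_3 sin_coeff_Suc cos_coeff_Suc)
  then have "\<bar>sin x - x\<bar> \<le> inverse (fact 3) * \<bar>x\<bar> ^ 3"
    using Maclaurin_sin_bound[of x 3] by simp
  then have "\<bar>sin x - x\<bar> \<le> x ^ 3 / 6" using assms by (simp add: fact_numeral)
  then have "x - x ^ 3 / 6 \<le> sin x" unfolding abs_le_iff by linarith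
  moreover have "x ^ 3 \<le> 4 * x"
    using assms mult_mono[of x 2 x 2] by (simp add: power3_eq_cube mult_right_mono)
  ultimately show ?thesis by simp
qed

lemma filterlim_at_0_of_LIMSEQ_scaled:
  fixes \<theta> :: "nat \<Rightarrow> real"
  assumes "\<forall>\<^sub>F M in sequentially. 0 < \<theta> M" and "(\<lambda>M. real M * \<theta> M) \<longlonglongrightarrow> L"
  shows "filterlim \<theta> (at 0) sequentially"
proof (rule filterlim_atI)
  have "(\<lambda>M. (real M * \<theta> M) * (1 / real M)) \<longlonglongrightarrow> L * 0"
    by (intro tendsto_intros assms(2) lim_inverse_n')
  moreover have "\<forall>\<^sub>F M in sequentially. (real M * \<theta> M) * (1 / real M) = \<theta> M"
    using eventually_gt_at_top[of 0] by eventually_elim simp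
  ultimately show "\<theta> \<longlonglongrightarrow> 0" using Lim_transform_eventually by fastforce
  show "\<forall>\<^sub>F M in sequentially. \<theta> M \<noteq> 0" using assms(1) by eventually_elim simp
qed

text \<open>Below, \<open>\<theta> M\<close> is the angle with \<open>\<bar>\<kappa>\<bar> = cos \<theta>\<close>; the scale \<open>M \<theta>\<close> decides which term
  of \<open>weight_sum_trig\<close> dominates.\<close>
lemma weight_sum_trig_large_scaled:
  fixes \<theta> :: "nat \<Rightarrow> real" and N :: "nat \<Rightarrow> nat"
  assumes \<epsilon>: "0 < \<epsilon>" "\<epsilon> < 1"
    and \<theta>: "\<forall>\<^sub>F M in sequentially. 0 < \<theta> M \<and> \<theta> M \<le> pi / 2"
    and large: "filterlim (\<lambda>M. real M * \<theta> M) at_top sequentially"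
    and N: "(\<lambda>M. real (N M) / real M) \<longlonglongrightarrow> z"
  shows "(\<lambda>M. weight_sum_trig (\<theta> M) \<epsilon> (N M) / (real M * (1 - \<epsilon> * (cos (\<theta> M))\<^sup>2))) \<longlonglongrightarrow> z"
proof -
  define D where "D M = 1 - \<epsilon> * (cos (\<theta> M))\<^sup>2" for M
  have D: "1 - \<epsilon> \<le> D M" for M
    using \<epsilon> cos_squared_eq[of "\<theta> M"] zero_le_power2[of "sin (\<theta> M)"]
    unfolding D_def by (smt (verit) mult_left_le)
  define err where "err M =
    (1 - \<epsilon>) * cos (\<theta> M) * sin (2 * real (N M) * \<theta> M) / (2 * sin (\<theta> M)) / (real M * D M)" for M
  have "\<forall>\<^sub>F M in sequentially. norm (err M) \<le> 3 / (2 * (1 - \<epsilon>)) * inverse (real M * \<theta> M)"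
    using \<theta> eventually_gt_at_top[of 0]
  proof eventually_elim
    case (elim M)
    have t: "0 < \<theta> M" "\<theta> M \<le> 2" using elim pi_less_4 by auto
    then have sin: "\<theta> M / 3 \<le> sin (\<theta> M)" using sin_ge_third by simp
    have "\<bar>(1 - \<epsilon>) * cos (\<theta> M) * sin (2 * real (N M) * \<theta> M)\<bar> \<le> 1 * 1 * 1"
      unfolding abs_mult using \<epsilon> by (intro mult_mono) (auto simp: abs_cos_le_one abs_sin_le_one)
    then have num: "\<bar>(1 - \<epsilon>) * cos (\<theta> M) * sin (2 * real (N M) * \<theta> M)\<bar> \<le> 1" by simp
    have "2 * (1 - \<epsilon>) / 3 * (real M * \<theta> M) = (2 * (\<theta> M / 3)) * (real M * (1 - \<epsilon>))"
      by (simp add: algebra_simps)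
    also have "\<dots> \<le> (2 * sin (\<theta> M)) * (real M * D M)"
      using sin D[of M] \<epsilon> t elim by (intro mult_mono) auto
    finally have den: "2 * (1 - \<epsilon>) / 3 * (real M * \<theta> M) \<le> 2 * sin (\<theta> M) * (real M * D M)" .
    have pos: "0 < 2 * (1 - \<epsilon>) / 3 * (real M * \<theta> M)" using \<epsilon> t elim by simp
    have "0 < sin (\<theta> M)" "0 < D M" using sin t D[of M] \<epsilon> by linarith+
    then have "norm (err M) = \<bar>(1 - \<epsilon>) * cos (\<theta> M) * sin (2 * real (N M) * \<theta> M)\<bar>
        / (2 * sin (\<theta> M) * (real M * D M))"
      unfolding err_def by (simp add: abs_mult abs_divide)
    also have "\<dots> \<le> 1 / (2 * (1 - \<epsilon>) / 3 * (real M * \<theta> M))"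
      by (rule frac_le) (use num pos den in auto)
    also have "\<dots> = 3 / (2 * (1 - \<epsilon>)) * inverse (real M * \<theta> M)" by (simp add: field_simps)
    finally show ?case .
  qed
  moreover have "(\<lambda>M. 3 / (2 * (1 - \<epsilon>)) * inverse (real M * \<theta> M)) \<longlonglongrightarrow> 0"
    by (rule tendsto_mult_right_zero[OF tendsto_inverse_0_at_top[OF large]])
  ultimately have "err \<longlonglongrightarrow> 0" by (rule Lim_null_comparison)
  then have "(\<lambda>M. real (N M) / real M - err M) \<longlonglongrightarrow> z - 0" by (intro tendsto_diff N)
  moreover have "\<forall>\<^sub>F M in sequentially.
      real (N M) / real M - err M = weight_sum_trig (\<theta> M) \<epsilon> (N M) / (real M * D M)"
    using eventually_gt_at_top[of 0] \<theta>
  proof eventually_elim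
    case (elim M)
    have "0 < sin (\<theta> M)" by (rule sin_gt_zero) (use elim pi_gt_zero in auto)
    moreover have "0 < D M" using D[of M] \<epsilon> by linarith
    ultimately show ?case unfolding err_def weight_sum_trig_def D_def[symmetric] using elim
      by (simp add: field_simps)
  qed
  ultimately show ?thesis unfolding D_def using Lim_transform_eventually by fastforce
qed

lemma weight_sum_trig_ratio_large:
  fixes \<theta> :: "nat \<Rightarrow> real" and K :: "nat \<Rightarrow> nat"
  assumes \<epsilon>: "0 < \<epsilon>" "\<epsilon> < 1"
    and \<theta>: "\<forall>\<^sub>F M in sequentially. 0 < \<theta> M \<and> \<theta> M \<le> pi / 2"
    and large: "filterlim (\<lambda>M. real M * \<theta> M) at_top sequentially"
    and K: "(\<lambda>M. real (K M) / real M) \<longlonglongrightarrow> y"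
  shows "(\<lambda>M. weight_sum_trig (\<theta> M) \<epsilon> (K M) / weight_sum_trig (\<theta> M) \<epsilon> M) \<longlonglongrightarrow> y"
proof -
  have D: "1 - \<epsilon> * (cos (\<theta> M))\<^sup>2 > 0" for M
    using \<epsilon> cos_squared_eq[of "\<theta> M"] zero_le_power2[of "sin (\<theta> M)"] by (smt (verit) mult_left_le)
  have "real M * (1 - \<epsilon> * (cos (\<theta> M))\<^sup>2) \<noteq> 0" if "0 < M" for M
    using D[of M] that by simp
  then have "\<forall>\<^sub>F M in sequentially. real M * (1 - \<epsilon> * (cos (\<theta> M))\<^sup>2) \<noteq> 0"
    by (rule eventually_mono[OF eventually_gt_at_top[of 0]])
  then have "(\<lambda>M. weight_sum_trig (\<theta> M) \<epsilon> (K M) / weight_sum_trig (\<theta> M) \<epsilon> M) \<longlonglongrightarrow> y / 1"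
    by (intro LIMSEQ_divide_common_scale[OF weight_sum_trig_large_scaled[OF \<epsilon> \<theta> large K]
        weight_sum_trig_large_scaled[OF \<epsilon> \<theta> large real_div_self_LIMSEQ]]) simp_all
  then show ?thesis by simp
qed

lemma weight_sum_trig_critical_scaled:
  fixes \<theta> :: "nat \<Rightarrow> real" and N :: "nat \<Rightarrow> nat"
  assumes \<theta>: "\<forall>\<^sub>F M in sequentially. 0 < \<theta> M \<and> \<theta> M \<le> pi / 2"
    and lim: "(\<lambda>M. real M * \<theta> M) \<longlonglongrightarrow> \<theta>s" and pos: "0 < \<theta>s"
    and N: "(\<lambda>M. real (N M) / real M) \<longlonglongrightarrow> z"
  shows "(\<lambda>M. weight_sum_trig (\<theta> M) \<epsilon> (N M) / real M)
    \<longlonglongrightarrow> (1 - \<epsilon>) * (z - sin (2 * z * \<theta>s) / (2 * \<theta>s))"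
proof -
  have \<theta>0: "filterlim \<theta> (at 0) sequentially"
    by (rule filterlim_at_0_of_LIMSEQ_scaled[OF _ lim]) (use \<theta> in eventually_elim, simp)
  have "((\<lambda>u::real. sin u / u) \<longlongrightarrow> 1) (at 0)" by real_asymp
  from filterlim_compose[OF this \<theta>0] have sinc: "(\<lambda>M. sin (\<theta> M) / \<theta> M) \<longlonglongrightarrow> 1" .
  have cos: "(\<lambda>M. cos (\<theta> M)) \<longlonglongrightarrow> 1"
    using tendsto_cos[of \<theta> 0] \<theta>0 by (simp add: filterlim_at)
  let ?n = "\<lambda>M. real (N M) / real M"
  have "(\<lambda>M. ?n M * (1 - \<epsilon> * (cos (\<theta> M))\<^sup>2) - (1 - \<epsilon>) * cos (\<theta> M) * sin (2 * ?n M * (real M * \<theta> M))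
        / (2 * (real M * \<theta> M) * (sin (\<theta> M) / \<theta> M)))
      \<longlonglongrightarrow> z * (1 - \<epsilon> * 1\<^sup>2) - (1 - \<epsilon>) * 1 * sin (2 * z * \<theta>s) / (2 * \<theta>s * 1)"
    using pos by (intro tendsto_intros N cos sinc lim) auto
  moreover have "\<forall>\<^sub>F M in sequentially.
      ?n M * (1 - \<epsilon> * (cos (\<theta> M))\<^sup>2) - (1 - \<epsilon>) * cos (\<theta> M) * sin (2 * ?n M * (real M * \<theta> M))
        / (2 * (real M * \<theta> M) * (sin (\<theta> M) / \<theta> M))
      = weight_sum_trig (\<theta> M) \<epsilon> (N M) / real M"
    using eventually_gt_at_top[of 0] \<theta>
  proof eventually_elim
    case (elim M)
    have "0 < sin (\<theta> M)" by (rule sin_gt_zero) (use elim pi_gt_zero in auto)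
    then show ?case using elim unfolding weight_sum_trig_def by (simp add: field_simps)
  qed
  ultimately show ?thesis using Lim_transform_eventually by (fastforce simp: algebra_simps)
qed

lemma weight_sum_trig_ratio_critical:
  fixes \<theta> :: "nat \<Rightarrow> real" and K :: "nat \<Rightarrow> nat"
  assumes \<epsilon>: "\<epsilon> < 1"
    and \<theta>: "\<forall>\<^sub>F M in sequentially. 0 < \<theta> M \<and> \<theta> M \<le> pi / 2"
    and lim: "(\<lambda>M. real M * \<theta> M) \<longlonglongrightarrow> \<theta>s" and pos: "0 < \<theta>s"
    and K: "(\<lambda>M. real (K M) / real M) \<longlonglongrightarrow> y"
  shows "(\<lambda>M. weight_sum_trig (\<theta> M) \<epsilon> (K M) / weight_sum_trig (\<theta> M) \<epsilon> M) \<longlonglongrightarrow>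
    (y - sin (2 * y * \<theta>s) / (2 * \<theta>s)) / (1 - sin (2 * \<theta>s) / (2 * \<theta>s))"
proof -
  have "sin (2 * \<theta>s) / (2 * \<theta>s) < 1" using sin_less_self[of "2 * \<theta>s"] pos by simp
  then have "(\<lambda>M. weight_sum_trig (\<theta> M) \<epsilon> (K M) / weight_sum_trig (\<theta> M) \<epsilon> M) \<longlonglongrightarrow>
      ((1 - \<epsilon>) * (y - sin (2 * y * \<theta>s) / (2 * \<theta>s))) / ((1 - \<epsilon>) * (1 - sin (2 * 1 * \<theta>s) / (2 * \<theta>s)))"
    by (intro LIMSEQ_divide_common_scale[OF weight_sum_trig_critical_scaled[OF \<theta> lim pos K]
        weight_sum_trig_critical_scaled[OF \<theta> lim pos real_div_self_LIMSEQ]])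
       (use \<epsilon> eventually_gt_at_top[of 0] in auto)
  then show ?thesis using \<epsilon> by simp
qed

lemma weight_sum_trig_small_expansion:
  fixes t m :: real
  assumes t: "0 < t" "0 < sin t" and m: "0 < m" and N: "0 < N"
  defines "k \<equiv> real N"
  shows "weight_sum_trig t \<epsilon> N / ((m * t) ^ 3 / (2 * sin t))
    = 2 * (1 - \<epsilon>) * (k / m) * (1 / m)\<^sup>2 * ((sin t - t * cos t) / t ^ 3)
      + (1 - \<epsilon>) * cos t * 8 * (k / m) ^ 3 * ((2 * k * t - sin (2 * k * t)) / (2 * k * t) ^ 3)
      + 2 * \<epsilon> * (k / m) * (1 / m)\<^sup>2 * (sin t / t) ^ 3"
proof -
  have "weight_sum_trig t \<epsilon> N * (2 * sin t)
      = 2 * k * sin t * (1 - \<epsilon> * (cos t)\<^sup>2) - (1 - \<epsilon>) * cos t * sin (2 * k * t)"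
    unfolding weight_sum_trig_def k_def using t by (simp add: field_simps)
  also have "\<dots> = 2 * (1 - \<epsilon>) * k * (sin t - t * cos t)
      + (1 - \<epsilon>) * cos t * (2 * k * t - sin (2 * k * t)) + 2 * \<epsilon> * k * (sin t) ^ 3"
    unfolding cos_squared_eq by (simp add: algebra_simps power2_eq_square power3_eq_cube)
  finally have "weight_sum_trig t \<epsilon> N / ((m * t) ^ 3 / (2 * sin t))
      = (2 * (1 - \<epsilon>) * k * (sin t - t * cos t)
         + (1 - \<epsilon>) * cos t * (2 * k * t - sin (2 * k * t)) + 2 * \<epsilon> * k * (sin t) ^ 3) / (m * t) ^ 3"
    using t by (simp add: field_simps)
  also have "\<dots> = 2 * (1 - \<epsilon>) * (k / m) * (1 / m)\<^sup>2 * ((sin t - t * cos t) / t ^ 3)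
      + (1 - \<epsilon>) * cos t * 8 * (k / m) ^ 3 * ((2 * k * t - sin (2 * k * t)) / (2 * k * t) ^ 3)
      + 2 * \<epsilon> * (k / m) * (1 / m)\<^sup>2 * (sin t / t) ^ 3"
    using t m N unfolding k_def by (simp add: field_simps power2_eq_square power3_eq_cube)
  finally show ?thesis .
qed

lemma weight_sum_trig_small_scaled:
  fixes \<theta> :: "nat \<Rightarrow> real" and N :: "nat \<Rightarrow> nat"
  assumes \<theta>: "\<forall>\<^sub>F M in sequentially. 0 < \<theta> M \<and> \<theta> M \<le> pi / 2"
    and small: "(\<lambda>M. real M * \<theta> M) \<longlonglongrightarrow> 0"
    and N: "(\<lambda>M. real (N M) / real M) \<longlonglongrightarrow> z" and z: "0 < z"
  shows "(\<lambda>M. weight_sum_trig (\<theta> M) \<epsilon> (N M) / ((real M * \<theta> M) ^ 3 / (2 * sin (\<theta> M))))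
    \<longlonglongrightarrow> (1 - \<epsilon>) * 8 * z ^ 3 / 6"
proof -
  let ?n = "\<lambda>M. real (N M) / real M"
  let ?u = "\<lambda>M. 2 * real (N M) * \<theta> M"
  have \<theta>0: "filterlim \<theta> (at 0) sequentially"
    by (rule filterlim_at_0_of_LIMSEQ_scaled[OF _ small]) (use \<theta> in eventually_elim, simp)
  have "((\<lambda>u::real. sin u / u) \<longlongrightarrow> 1) (at 0)" by real_asymp
  from filterlim_compose[OF this \<theta>0] have sinc: "(\<lambda>M. sin (\<theta> M) / \<theta> M) \<longlonglongrightarrow> 1" .
  have "((\<lambda>u::real. (sin u - u * cos u) / u ^ 3) \<longlongrightarrow> 1 / 3) (at 0)" by real_asymp
  from filterlim_compose[OF this \<theta>0]
  have sin_cos: "(\<lambda>M. (sin (\<theta> M) - \<theta> M * cos (\<theta> M)) / \<theta> M ^ 3) \<longlonglongrightarrow> 1 / 3" .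
  have cos: "(\<lambda>M. cos (\<theta> M)) \<longlonglongrightarrow> 1"
    using tendsto_cos[of \<theta> 0] \<theta>0 by (simp add: filterlim_at)
  have "\<forall>\<^sub>F M in sequentially. 0 < ?n M" using order_tendstoD(1)[OF N z] .
  then have ev: "\<forall>\<^sub>F M in sequentially. 0 < M \<and> 0 < N M \<and> 0 < \<theta> M \<and> 0 < sin (\<theta> M)"
    using \<theta> eventually_gt_at_top[of 0]
    by eventually_elim (auto simp: zero_less_divide_iff intro: sin_gt_zero)
  have "?u \<longlonglongrightarrow> 2 * z * 0"
  proof (rule Lim_transform_eventually)
    show "(\<lambda>M. 2 * ?n M * (real M * \<theta> M)) \<longlonglongrightarrow> 2 * z * 0" by (intro tendsto_intros N small)
    show "\<forall>\<^sub>F M in sequentially. 2 * ?n M * (real M * \<theta> M) = ?u M"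
      using eventually_gt_at_top[of 0] by eventually_elim simp
  qed
  moreover have "\<forall>\<^sub>F M in sequentially. ?u M \<noteq> 0" using ev by eventually_elim simp
  ultimately have "filterlim ?u (at 0) sequentially" by (simp add: filterlim_atI)
  moreover have "((\<lambda>u::real. (u - sin u) / u ^ 3) \<longlongrightarrow> 1 / 6) (at 0)" by real_asymp
  ultimately have defect: "(\<lambda>M. (?u M - sin (?u M)) / ?u M ^ 3) \<longlonglongrightarrow> 1 / 6"
    by (rule filterlim_compose[rotated])
  have "(\<lambda>M. 2 * (1 - \<epsilon>) * ?n M * (1 / real M)\<^sup>2 * ((sin (\<theta> M) - \<theta> M * cos (\<theta> M)) / \<theta> M ^ 3)
       + (1 - \<epsilon>) * cos (\<theta> M) * 8 * ?n M ^ 3 * ((?u M - sin (?u M)) / ?u M ^ 3)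
       + 2 * \<epsilon> * ?n M * (1 / real M)\<^sup>2 * (sin (\<theta> M) / \<theta> M) ^ 3)
    \<longlonglongrightarrow> 2 * (1 - \<epsilon>) * z * 0\<^sup>2 * (1 / 3) + (1 - \<epsilon>) * 1 * 8 * z ^ 3 * (1 / 6)
        + 2 * \<epsilon> * z * 0\<^sup>2 * 1 ^ 3"
    by (intro tendsto_intros N cos sinc sin_cos defect lim_inverse_n')
  moreover have "\<forall>\<^sub>F M in sequentially.
      2 * (1 - \<epsilon>) * ?n M * (1 / real M)\<^sup>2 * ((sin (\<theta> M) - \<theta> M * cos (\<theta> M)) / \<theta> M ^ 3)
       + (1 - \<epsilon>) * cos (\<theta> M) * 8 * ?n M ^ 3 * ((?u M - sin (?u M)) / ?u M ^ 3)
       + 2 * \<epsilon> * ?n M * (1 / real M)\<^sup>2 * (sin (\<theta> M) / \<theta> M) ^ 3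
      = weight_sum_trig (\<theta> M) \<epsilon> (N M) / ((real M * \<theta> M) ^ 3 / (2 * sin (\<theta> M)))"
    using ev by eventually_elim (intro weight_sum_trig_small_expansion[symmetric], auto)
  ultimately show ?thesis using Lim_transform_eventually by fastforce
qed

lemma weight_sum_trig_ratio_small:
  fixes \<theta> :: "nat \<Rightarrow> real" and K :: "nat \<Rightarrow> nat"
  assumes \<epsilon>: "\<epsilon> < 1"
    and \<theta>: "\<forall>\<^sub>F M in sequentially. 0 < \<theta> M \<and> \<theta> M \<le> pi / 2"
    and small: "(\<lambda>M. real M * \<theta> M) \<longlonglongrightarrow> 0"
    and K: "(\<lambda>M. real (K M) / real M) \<longlonglongrightarrow> y" and y: "0 < y"
  shows "(\<lambda>M. weight_sum_trig (\<theta> M) \<epsilon> (K M) / weight_sum_trig (\<theta> M) \<epsilon> M) \<longlonglongrightarrow> y ^ 3"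
proof -
  have "\<forall>\<^sub>F M in sequentially. (real M * \<theta> M) ^ 3 / (2 * sin (\<theta> M)) \<noteq> 0"
    using eventually_gt_at_top[of 0] \<theta>
  proof eventually_elim
    case (elim M)
    have "0 < sin (\<theta> M)" by (rule sin_gt_zero) (use elim pi_gt_zero in auto)
    then show ?case using elim by simp
  qed
  then have "(\<lambda>M. weight_sum_trig (\<theta> M) \<epsilon> (K M) / weight_sum_trig (\<theta> M) \<epsilon> M)
      \<longlonglongrightarrow> ((1 - \<epsilon>) * 8 * y ^ 3 / 6) / ((1 - \<epsilon>) * 8 * 1 ^ 3 / 6)"
    using \<epsilon> by (intro LIMSEQ_divide_common_scale[OF weight_sum_trig_small_scaled[OF \<theta> small K y]
        weight_sum_trig_small_scaled[OF \<theta> small real_div_self_LIMSEQ]]) simp_all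
  then show ?thesis using \<epsilon> by simp
qed

section \<open>The four regimes\<close>

context unitary_coin
begin

lemma abs_kappa: "\<bar>kappa \<xi>\<bar> = \<bar>cos (omega_of a b c d \<xi>)\<bar> / cmod a"
  unfolding kappa_def by (simp add: abs_divide)

lemma power2_norm_a_bounds: "0 < (cmod a)\<^sup>2" "(cmod a)\<^sup>2 < 1"
  using a_nonzero norm_a_less_1 by (simp_all add: abs_square_less_1)

lemma theta_of_eq_arccos:
  assumes "\<bar>cos (omega_of a b c d \<xi>)\<bar> < cmod a"
  shows "theta_of a (omega_of a b c d \<xi>) = arccos \<bar>kappa \<xi>\<bar>"
proof -
  define q where "q = cos (omega_of a b c d \<xi>) / cmod a"
  have "\<bar>kappa \<xi>\<bar> = \<bar>q\<bar>" "\<bar>q\<bar> < 1"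
    using assms a_nonzero unfolding q_def abs_kappa by (simp_all add: abs_divide)
  then show ?thesis
    unfolding theta_of_def q_def[symmetric] by (cases "0 < q") (simp_all add: arccos_minus)
qed

lemma weight_sum_ratio_arccos:
  assumes "\<bar>\<kappa>\<bar> < 1"
  shows "weight_sum \<bar>\<kappa>\<bar> \<epsilon> K / weight_sum \<bar>\<kappa>\<bar> \<epsilon> M
    = weight_sum_trig (arccos \<bar>\<kappa>\<bar>) \<epsilon> K / weight_sum_trig (arccos \<bar>\<kappa>\<bar>) \<epsilon> M"
proof -
  have "0 < arccos \<bar>\<kappa>\<bar>" "arccos \<bar>\<kappa>\<bar> < pi" using assms arccos_lt_bounded[of "\<bar>\<kappa>\<bar>"] by auto
  then have "sin (arccos \<bar>\<kappa>\<bar>) \<noteq> 0" using sin_gt_zero by fastforce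
  then have "weight_sum \<bar>\<kappa>\<bar> \<epsilon> N = weight_sum_trig (arccos \<bar>\<kappa>\<bar>) \<epsilon> N / (sin (arccos \<bar>\<kappa>\<bar>))\<^sup>2" for N
    using weight_sum_cos[of "arccos \<bar>\<kappa>\<bar>" \<epsilon> N] assms by (simp add: field_simps)
  then show ?thesis using \<open>sin (arccos \<bar>\<kappa>\<bar>) \<noteq> 0\<close> by simp
qed

lemma eventually_inside_band:
  fixes \<xi> :: "nat \<Rightarrow> real" and x :: real
  assumes "\<forall>M\<ge>1. \<bar>cos (omega_of a b c d (\<xi> M))\<bar> < cmod a"
  defines "\<theta> \<equiv> \<lambda>M. arccos \<bar>kappa (\<xi> M)\<bar>"
  shows "\<forall>\<^sub>F M in sequentially. 0 < \<theta> M \<and> \<theta> M \<le> pi / 2"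
    and "\<forall>\<^sub>F M in sequentially. theta_of a (omega_of a b c d (\<xi> M)) = \<theta> M"
    and "\<forall>\<^sub>F M in sequentially. weight_sum_trig (\<theta> M) ((cmod a)\<^sup>2) (M - nat \<lfloor>x * real M\<rfloor> - 1)
      / weight_sum_trig (\<theta> M) ((cmod a)\<^sup>2) M = tail_ratio (\<xi> M) M x"
proof -
  have inside: "\<forall>\<^sub>F M in sequentially. \<bar>cos (omega_of a b c d (\<xi> M))\<bar> < cmod a \<and> \<bar>kappa (\<xi> M)\<bar> < 1"
    using eventually_ge_at_top[of 1]
    by eventually_elim (use assms(1) a_nonzero in \<open>auto simp: abs_kappa divide_less_eq\<close>)
  show "\<forall>\<^sub>F M in sequentially. 0 < \<theta> M \<and> \<theta> M \<le> pi / 2"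
    using inside
  proof eventually_elim
    case (elim M)
    then have "arccos \<bar>kappa (\<xi> M)\<bar> \<le> arccos 0" by (intro arccos_le_arccos) auto
    then show ?case using elim arccos_lt_bounded[of "\<bar>kappa (\<xi> M)\<bar>"] unfolding \<theta>_def by auto
  qed
  show "\<forall>\<^sub>F M in sequentially. theta_of a (omega_of a b c d (\<xi> M)) = \<theta> M"
    using inside by eventually_elim (simp add: \<theta>_def theta_of_eq_arccos)
  show "\<forall>\<^sub>F M in sequentially. weight_sum_trig (\<theta> M) ((cmod a)\<^sup>2) (M - nat \<lfloor>x * real M\<rfloor> - 1)
      / weight_sum_trig (\<theta> M) ((cmod a)\<^sup>2) M = tail_ratio (\<xi> M) M x"
    using inside by eventually_elim (simp add: \<theta>_def tail_ratio_def weight_sum_ratio_arccos)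
qed

lemma weak_conv_outside_band:
  assumes "\<bar>cos (omega_of a b c d \<xi>)\<bar> > cmod a"
  shows "weak_conv_m (\<lambda>M. scaled_law a b c d M \<xi>) (return borel 0)"
proof (rule weak_conv_scaled_law[where L = "\<lambda>x. 0"])
  show "cdf (return borel 0) x = (if x < 0 then 0 else if 1 \<le> x then 1 else 1 - 0)" for x
    by (simp add: cdf_return_0)
next
  fix x :: real
  assume x: "0 \<le> x" "x < 1" "isCont (cdf (return borel 0)) x"
  have "1 < \<bar>kappa \<xi>\<bar>" using assms a_nonzero by (simp add: abs_kappa less_divide_eq)
  moreover have "(cmod a)\<^sup>2 * \<bar>kappa \<xi>\<bar> < 1"
    using kappa_scaled_bounds(2)[of \<xi>] norm_a_less_1 by linarith
  moreover have "0 < x" using x isCont_cdf_return_0 by force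
  ultimately show "(\<lambda>M. tail_ratio \<xi> M x) \<longlonglongrightarrow> 0"
    unfolding tail_ratio_def using x tail_index_gap_at_top
    by (intro weight_sum_ratio_hyperbolic) (auto simp: mult.commute)
qed

lemma weak_conv_band_edge:
  assumes "\<bar>cos (omega_of a b c d \<xi>)\<bar> = cmod a"
  shows "weak_conv_m (\<lambda>M. scaled_law a b c d M \<xi>) (law_with_density (\<lambda>x. 3 * (1 - x)\<^sup>2))"
proof -
  have "\<bar>kappa \<xi>\<bar> = 1" using assms a_nonzero by (simp add: abs_kappa)
  then show ?thesis
    using weight_sum_ratio_parabolic[OF tail_index_ratio_LIMSEQ power2_norm_a_bounds(2)]
    by (intro weak_conv_scaled_law[OF _ cdf_cubic_law]) (simp add: tail_ratio_def)
qed

lemma weak_conv_inside_band_small: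
  assumes inside: "\<forall>M\<ge>1. \<bar>cos (omega_of a b c d (\<xi> M))\<bar> < cmod a"
    and small: "(\<lambda>M. real M * theta_of a (omega_of a b c d (\<xi> M))) \<longlonglongrightarrow> 0"
  shows "weak_conv_m (\<lambda>M. scaled_law a b c d M (\<xi> M)) (law_with_density (\<lambda>x. 3 * (1 - x)\<^sup>2))"
proof (rule weak_conv_scaled_law[OF _ cdf_cubic_law])
  note band = eventually_inside_band[OF inside]
  have \<theta>: "(\<lambda>M. real M * arccos \<bar>kappa (\<xi> M)\<bar>) \<longlonglongrightarrow> 0"
    by (rule Lim_transform_eventually[OF small]) (use band(2) in eventually_elim, simp)
  fix x :: real
  assume x: "0 \<le> x" "x < 1" "isCont (cdf (law_with_density (\<lambda>x. 3 * (1 - x)\<^sup>2))) x"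
  show "(\<lambda>M. tail_ratio (\<xi> M) M x) \<longlonglongrightarrow> (1 - x) ^ 3"
    using x by (intro Lim_transform_eventually[OF weight_sum_trig_ratio_small[OF power2_norm_a_bounds(2)
        band(1) \<theta> tail_index_ratio_LIMSEQ] band(3)]) simp_all
qed

lemma weak_conv_inside_band_critical:
  assumes inside: "\<forall>M\<ge>1. \<bar>cos (omega_of a b c d (\<xi> M))\<bar> < cmod a" and pos: "0 < \<theta>s"
    and critical: "(\<lambda>M. real M * theta_of a (omega_of a b c d (\<xi> M))) \<longlonglongrightarrow> \<theta>s"
  shows "weak_conv_m (\<lambda>M. scaled_law a b c d M (\<xi> M))
    (law_with_density (\<lambda>x. 2 / (1 - sin (2 * \<theta>s) / (2 * \<theta>s)) * (sin ((1 - x) * \<theta>s))\<^sup>2))"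
proof (rule weak_conv_scaled_law[OF _ cdf_sine_law[OF pos]])
  note band = eventually_inside_band[OF inside]
  have \<theta>: "(\<lambda>M. real M * arccos \<bar>kappa (\<xi> M)\<bar>) \<longlonglongrightarrow> \<theta>s"
    by (rule Lim_transform_eventually[OF critical]) (use band(2) in eventually_elim, simp)
  fix x :: real
  assume x: "0 \<le> x" "x < 1"
    "isCont (cdf (law_with_density (\<lambda>x. 2 / (1 - sin (2 * \<theta>s) / (2 * \<theta>s)) * (sin ((1 - x) * \<theta>s))\<^sup>2))) x"
  show "(\<lambda>M. tail_ratio (\<xi> M) M x)
    \<longlonglongrightarrow> ((1 - x) - sin (2 * (1 - x) * \<theta>s) / (2 * \<theta>s)) / (1 - sin (2 * \<theta>s) / (2 * \<theta>s))"
    by (rule Lim_transform_eventually[OF weight_sum_trig_ratio_critical[OF power2_norm_a_bounds(2)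
        band(1) \<theta> pos tail_index_ratio_LIMSEQ[OF x(1,2)]] band(3)])
qed

lemma weak_conv_inside_band_large:
  assumes inside: "\<forall>M\<ge>1. \<bar>cos (omega_of a b c d (\<xi> M))\<bar> < cmod a"
    and large: "filterlim (\<lambda>M. real M * theta_of a (omega_of a b c d (\<xi> M))) at_top sequentially"
  shows "weak_conv_m (\<lambda>M. scaled_law a b c d M (\<xi> M)) (law_with_density (\<lambda>x. 1))"
proof (rule weak_conv_scaled_law[where L = "\<lambda>x. 1 - x"])
  show "cdf (law_with_density (\<lambda>x. 1)) x = (if x < 0 then 0 else if 1 \<le> x then 1 else 1 - (1 - x))"
    for x by (simp add: cdf_uniform_law)
next
  note band = eventually_inside_band[OF inside]
  have \<theta>: "filterlim (\<lambda>M. real M * arccos \<bar>kappa (\<xi> M)\<bar>) at_top sequentially"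
    by (rule filterlim_cong[THEN iffD1, OF refl refl _ large]) (use band(2) in eventually_elim, simp)
  fix x :: real
  assume x: "0 \<le> x" "x < 1" "isCont (cdf (law_with_density (\<lambda>x. 1))) x"
  show "(\<lambda>M. tail_ratio (\<xi> M) M x) \<longlonglongrightarrow> 1 - x"
    by (rule Lim_transform_eventually[OF weight_sum_trig_ratio_large[OF power2_norm_a_bounds
        band(1) \<theta> tail_index_ratio_LIMSEQ[OF x(1,2)]] band(3)])
qed

end

theorem theorem3p1:
  fixes a b c d :: complex
  assumes unit: "unitary2 a b c d"
    and nz: "a * b * c * d \<noteq> 0"
  shows
    "(\<forall>\<xi>::real. \<bar>cos (omega_of a b c d \<xi>)\<bar> > cmod a \<longrightarrow>
        weak_conv_m (\<lambda>M. scaled_law a b c d M \<xi>) (return borel 0))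
   \<and> (\<forall>\<xi>::real. \<bar>cos (omega_of a b c d \<xi>)\<bar> = cmod a \<longrightarrow>
        weak_conv_m (\<lambda>M. scaled_law a b c d M \<xi>) (law_with_density (\<lambda>x. 3 * (1 - x)\<^sup>2)))
   \<and> (\<forall>\<xi>::nat \<Rightarrow> real.
        (\<forall>M\<ge>1. \<bar>cos (omega_of a b c d (\<xi> M))\<bar> < cmod a) \<and>
        (\<lambda>M. real M * theta_of a (omega_of a b c d (\<xi> M))) \<longlonglongrightarrow> 0 \<longrightarrow>
        weak_conv_m (\<lambda>M. scaled_law a b c d M (\<xi> M)) (law_with_density (\<lambda>x. 3 * (1 - x)\<^sup>2)))
   \<and> (\<forall>(\<xi>::nat \<Rightarrow> real) (\<theta>s::real).
        (\<forall>M\<ge>1. \<bar>cos (omega_of a b c d (\<xi> M))\<bar> < cmod a) \<and> 0 < \<theta>s \<and>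
        (\<lambda>M. real M * theta_of a (omega_of a b c d (\<xi> M))) \<longlonglongrightarrow> \<theta>s \<longrightarrow>
        weak_conv_m (\<lambda>M. scaled_law a b c d M (\<xi> M))
          (law_with_density (\<lambda>x. 2 / (1 - sin (2 * \<theta>s) / (2 * \<theta>s)) * (sin ((1 - x) * \<theta>s))\<^sup>2)))
   \<and> (\<forall>\<xi>::nat \<Rightarrow> real.
        (\<forall>M\<ge>1. \<bar>cos (omega_of a b c d (\<xi> M))\<bar> < cmod a) \<and>
        filterlim (\<lambda>M. real M * theta_of a (omega_of a b c d (\<xi> M))) at_top sequentially \<longrightarrow>
        weak_conv_m (\<lambda>M. scaled_law a b c d M (\<xi> M)) (law_with_density (\<lambda>x. 1)))"
proof -
  interpret unitary_coin a b c d using unit nz by unfold_locales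
  show ?thesis
    using weak_conv_outside_band weak_conv_band_edge weak_conv_inside_band_small
      weak_conv_inside_band_critical weak_conv_inside_band_large
    by blast
qed

end
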